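(* Let $p=p(n)$ with $p/n\to y\in(0,\infty)$. Let $\omega$ be a word of length $2k$ with $b$ distinct letters and $r+1$ even generating vertices. (i) For the symmetric Hankel link $L_{H^{(s)}}(i,j)=i+j$, the limit $\lim_{n\to\infty}|\Pi_{S_{H^{(s)}}}(\omega)|/(p^{r+1}n^{b-r})$ exists and is strictly positive if and only if $\omega$ is symmetric (otherwise it is $0$). (ii) For the asymmetric Hankel link $L_H(i,j)=i+j$ if $i\ge j$ and $L_H(i,j)=-(i+j)$ if $i<j$, the limit $\lim_{n\to\infty}|\Pi_{S_H}(\omega)|/(p^{r+1}n^{b-r})$ exists, and it equals $0$ whenever $\omega$ is not symmetric.
   Context: Words: a word of length $m$ is a sequence of letters whose distinct letters first appear in alphabetical order. A word is symmetric if each distinct letter appears the same number of times in odd positions as in even positions. Circuits for $S_A$ with link function $L$: maps $\pi:\{0,\dots,2k\}\to\mathbb N$ with $\pi(0)=\pi(2k)$, $1\le\pi(2i)\le p$, $1\le\pi(2i-1)\le n$; $\xi_\pi(2i-1)=L(\pi(2i-2),\pi(2i-1))$, $\xi_\pi(2i)=L(\pi(2i),\pi(2i-1))$. For a word $\omega$ of length $2k$, $\Pi_{S_A}(\omega)=\{\pi:\ \omega[i]=\omega[j]\iff\xi_\pi(i)=\xi_\pi(j)\ \forall i,j\}$. The vertex $\pi(i)$ is generating if $i=0$ or $\omega[i]$ is the first occurrence of its letter; it is even if $i$ is even. *)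

theory Defs
  imports Complex_Main
begin

text \<open>A word is a list whose distinct letters first appear in increasing order
  0, 1, 2, ... (canonical representative). Positions are 1-based:
  omega[i] = w ! (i - 1) for 1 <= i <= length w.\<close>

definition is_word :: "nat list \<Rightarrow> bool" where
  "is_word w \<longleftrightarrow> (\<forall>i < length w. w ! i \<in> set (take i w) \<or> w ! i = card (set (take i w)))"

definition letter :: "nat list \<Rightarrow> nat \<Rightarrow> nat" where
  "letter w i = w ! (i - 1)"

definition symmetric_word :: "nat list \<Rightarrow> bool" where
  "symmetric_word w \<longleftrightarrow> (\<forall>a \<in> set w.
     card {i \<in> {1..length w}. odd i \<and> letter w i = a} =
     card {i \<in> {1..length w}. even i \<and> letter w i = a})"

definition generating :: "nat list \<Rightarrow> nat \<Rightarrow> bool" where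
  "generating w i \<longleftrightarrow> i = 0 \<or> (1 \<le> i \<and> i \<le> length w \<and>
      (\<forall>j. 1 \<le> j \<and> j < i \<longrightarrow> letter w j \<noteq> letter w i))"

definition num_even_generating :: "nat list \<Rightarrow> nat" where
  "num_even_generating w = card {i \<in> {0..length w}. even i \<and> generating w i}"

text \<open>Circuits of length 2k for S_A: pi is extended by 0 beyond 2k to make the set finite.\<close>
definition circuits :: "nat \<Rightarrow> nat \<Rightarrow> nat \<Rightarrow> (nat \<Rightarrow> nat) set" where
  "circuits p n k = {\<pi>. (\<forall>i > 2*k. \<pi> i = 0) \<and> \<pi> 0 = \<pi> (2*k) \<and>
      (\<forall>i \<le> k. 1 \<le> \<pi> (2*i) \<and> \<pi> (2*i) \<le> p) \<and>
      (\<forall>i. 1 \<le> i \<and> i \<le> k \<longrightarrow> 1 \<le> \<pi> (2*i - 1) \<and> \<pi> (2*i - 1) \<le> n)}"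

definition xi :: "(nat \<Rightarrow> nat \<Rightarrow> int) \<Rightarrow> (nat \<Rightarrow> nat) \<Rightarrow> nat \<Rightarrow> int" where
  "xi L \<pi> j = (if odd j then L (\<pi> (j - 1)) (\<pi> j) else L (\<pi> j) (\<pi> (j - 1)))"

definition Pi_S :: "(nat \<Rightarrow> nat \<Rightarrow> int) \<Rightarrow> nat \<Rightarrow> nat \<Rightarrow> nat list \<Rightarrow> (nat \<Rightarrow> nat) set" where
  "Pi_S L p n w = {\<pi> \<in> circuits p n (length w div 2).
      \<forall>i \<in> {1..length w}. \<forall>j \<in> {1..length w}.
        (letter w i = letter w j \<longleftrightarrow> xi L \<pi> i = xi L \<pi> j)}"

definition L_Hs :: "nat \<Rightarrow> nat \<Rightarrow> int" where
  "L_Hs i j = int (i + j)"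

definition L_H :: "nat \<Rightarrow> nat \<Rightarrow> int" where
  "L_H i j = (if i \<ge> j then int (i + j) else - int (i + j))"

end

theory Submission
  imports Defs "HOL-Analysis.Analysis"
begin

text \<open>
  For both Hankel links |xi(i)| = pi(i-1) + pi(i), so a circuit in Pi_S(w) is determined by its
  values at the b + 1 generating vertices, the remaining vertices being fixed integer linear
  combinations of these.  After rescaling by n the admissible values of the generating vertices
  are the lattice points of mesh 1/n inside a region of R^(b+1); hence
  |Pi_S(w)| / n^(b+1) is a Riemann sum, which converges by dominated convergence once one knows
  that membership of the lattice point near a fixed u is eventually constant.  This holds for
  all u off countably many hyperplanes, since every constraint is a strict or non-strict
  comparison of an integer linear form in u with 0, 1 or y.
  If w is not symmetric, the closing condition pi(0) = pi(2k) is a nontrivial such linear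
  equation, so the limit is 0; if w is symmetric it holds identically, and for the symmetric
  link the region contains a small box around the point with even coordinates y/2 and odd ones
  1/2, so the limit is positive.  Finally p^(r+1) n^(b-r) and n^(b+1) differ by the convergent
  factor (p/n)^(r+1).
\<close>

definition first_occ :: "nat list \<Rightarrow> nat \<Rightarrow> nat" where
  "first_occ w a = (LEAST j. 1 \<le> j \<and> letter w j = a)"

definition first_pos :: "nat list \<Rightarrow> nat \<Rightarrow> nat" where
  "first_pos w i = first_occ w (letter w i)"

lemma first_pos_props:
  assumes "1 \<le> i"
  shows "1 \<le> first_pos w i \<and> first_pos w i \<le> i \<and> letter w (first_pos w i) = letter w i"
proof -
  have "1 \<le> first_pos w i \<and> letter w (first_pos w i) = letter w i"
    unfolding first_pos_def first_occ_def by (rule LeastI[of _ i]) (use assms in simp)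
  moreover have "first_pos w i \<le> i"
    unfolding first_pos_def first_occ_def by (rule Least_le) (use assms in simp)
  ultimately show ?thesis by simp
qed

lemma first_pos_le:
  assumes "1 \<le> j" "letter w j = letter w i"
  shows "first_pos w i \<le> j"
  unfolding first_pos_def first_occ_def by (rule Least_le) (use assms in simp)

lemma generating_iff_first_pos:
  assumes "1 \<le> i" "i \<le> length w"
  shows "generating w i \<longleftrightarrow> first_pos w i = i"
proof
  assume "generating w i"
  then have "\<not> first_pos w i < i"
    using first_pos_props[OF assms(1), of w] unfolding generating_def by auto
  then show "first_pos w i = i" using first_pos_props[OF assms(1), of w] by simp
next
  assume e: "first_pos w i = i"
  show "generating w i" unfolding generating_def
  proof (intro disjI2 conjI allI impI)
    fix j assume "1 \<le> j \<and> j < i"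
    then show "letter w j \<noteq> letter w i" using first_pos_le[of j w i] e by auto
  qed (use assms in auto)
qed

lemma generating_first_pos:
  assumes "1 \<le> i" "i \<le> length w"
  shows "generating w (first_pos w i)"
proof -
  have "first_pos w (first_pos w i) = first_pos w i"
    using first_pos_props[OF assms(1)] unfolding first_pos_def by simp
  then show ?thesis
    using first_pos_props[OF assms(1), of w] assms generating_iff_first_pos[of "first_pos w i" w] by simp
qed

lemma first_pos_eq_iff:
  assumes "1 \<le> i" "1 \<le> j"
  shows "first_pos w i = first_pos w j \<longleftrightarrow> letter w i = letter w j"
  using first_pos_props[OF assms(1), of w] first_pos_props[OF assms(2), of w]
  unfolding first_pos_def by metis

lemma nongenerating_first_pos_less:
  assumes "i \<le> length w" "\<not> generating w i"
  shows "1 \<le> i" "first_pos w i < i"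
proof -
  show "1 \<le> i" using assms(2) unfolding generating_def by (cases i) auto
  then show "first_pos w i < i"
    using generating_iff_first_pos[OF _ assms(1)] assms(2) first_pos_props[of i w] by auto
qed

lemma first_occ_props:
  assumes "a \<in> set w"
  shows "1 \<le> first_occ w a \<and> first_occ w a \<le> length w \<and> letter w (first_occ w a) = a"
proof -
  obtain i where i: "i < length w" "w ! i = a" using assms by (auto simp: in_set_conv_nth)
  then have l: "letter w (Suc i) = a" by (simp add: letter_def)
  have "1 \<le> first_occ w a \<and> letter w (first_occ w a) = a"
    unfolding first_occ_def by (rule LeastI[of _ "Suc i"]) (use l in simp)
  moreover have "first_occ w a \<le> Suc i" unfolding first_occ_def by (rule Least_le) (use l in simp)
  ultimately show ?thesis using i by simp
qed

lemma generating_first_occ: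
  assumes "a \<in> set w"
  shows "generating w (first_occ w a)"
  using first_occ_props[OF assms] generating_iff_first_pos[of "first_occ w a" w]
  unfolding first_pos_def by simp

lemma letter_in_set: "1 \<le> i \<Longrightarrow> i \<le> length w \<Longrightarrow> letter w i \<in> set w"
  by (simp add: letter_def)

definition gen_vertices :: "nat list \<Rightarrow> nat set" where
  "gen_vertices w = {i. i \<le> length w \<and> generating w i}"

lemma finite_gen_vertices: "finite (gen_vertices w)"
  unfolding gen_vertices_def by auto

lemma zero_in_gen_vertices: "0 \<in> gen_vertices w"
  unfolding gen_vertices_def generating_def by auto

lemma gen_vertices_eq: "gen_vertices w = insert 0 (first_occ w ` set w)"
proof (intro equalityI subsetI)
  fix i assume i: "i \<in> gen_vertices w"
  show "i \<in> insert 0 (first_occ w ` set w)"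
  proof (cases "i = 0")
    case False
    then have "1 \<le> i" "i \<le> length w" "generating w i" using i unfolding gen_vertices_def by auto
    then have "i = first_occ w (letter w i)" "letter w i \<in> set w"
      using generating_iff_first_pos letter_in_set unfolding first_pos_def by auto
    then show ?thesis by blast
  qed simp
next
  fix i assume "i \<in> insert 0 (first_occ w ` set w)"
  then show "i \<in> gen_vertices w"
    using zero_in_gen_vertices generating_first_occ first_occ_props unfolding gen_vertices_def by auto
qed

lemma inj_on_first_occ: "inj_on (first_occ w) (set w)"
  by (rule inj_onI) (metis first_occ_props)

lemma card_gen_vertices: "card (gen_vertices w) = card (set w) + 1"
proof -
  have "0 \<notin> first_occ w ` set w" using first_occ_props by fastforce
  then have "card (gen_vertices w) = Suc (card (first_occ w ` set w))"
    unfolding gen_vertices_eq by (simp add: card_insert_if)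
  also have "card (first_occ w ` set w) = card (set w)" by (rule card_image[OF inj_on_first_occ])
  finally show ?thesis by simp
qed

section \<open>Extending values at generating vertices\<close>

text \<open>Values at non-generating vertices are forced by t(i-1) + t(i) = t(f-1) + t(f), where f is
  the first occurrence of the letter at i.  The guard on first_pos only serves termination; it
  never fires by nongenerating_first_pos_less.\<close>

function extend :: "nat list \<Rightarrow> (nat \<Rightarrow> real) \<Rightarrow> nat \<Rightarrow> real" where
  "extend w x i = (if generating w i \<or> length w < i \<or> \<not> first_pos w i < i then x i
     else extend w x (first_pos w i - 1) + extend w x (first_pos w i) - extend w x (i - 1))"
  by pat_completeness auto
termination
  by (relation "Wellfounded.measure (\<lambda>(w, x, i). i)") (auto simp: generating_def)

declare extend.simps[simp del]

lemma extend_generating: "generating w i \<or> length w < i \<Longrightarrow> extend w x i = x i"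
  by (subst extend.simps) auto

lemma extend_nongenerating:
  assumes "i \<le> length w" "\<not> generating w i"
  shows "extend w x i = extend w x (first_pos w i - 1) + extend w x (first_pos w i) - extend w x (i - 1)"
  using nongenerating_first_pos_less[OF assms] assms by (subst extend.simps) auto

lemma extend_induct:
  assumes gen: "\<And>i. generating w i \<or> length w < i \<Longrightarrow> P i"
    and nongen: "\<And>i. i \<le> length w \<Longrightarrow> \<not> generating w i \<Longrightarrow> 1 \<le> i \<Longrightarrow> first_pos w i < i \<Longrightarrow>
               1 \<le> first_pos w i \<Longrightarrow> P (first_pos w i - 1) \<Longrightarrow> P (first_pos w i) \<Longrightarrow> P (i - 1) \<Longrightarrow> P i"
  shows "P i"
proof (induction i rule: less_induct)
  case (less i)
  show ?case
  proof (cases "generating w i \<or> length w < i")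
    case False
    then have i: "i \<le> length w" "\<not> generating w i" by auto
    note less_i = nongenerating_first_pos_less[OF i]
    have "1 \<le> first_pos w i" using first_pos_props[OF less_i(1)] by auto
    with i less_i show ?thesis by (intro nongen[OF i less_i] less) auto
  qed (rule gen)
qed

lemma extend_cong:
  assumes "\<And>j. j \<in> gen_vertices w \<Longrightarrow> x j = x' j"
  shows "i \<le> length w \<Longrightarrow> extend w x i = extend w x' i"
proof (induction i rule: extend_induct[where w=w])
  case (1 i) then show ?case using assms extend_generating[of w i] unfolding gen_vertices_def by auto
next
  case (2 i) then show ?case by (simp add: extend_nongenerating)
qed

lemma extend_linear: "extend w (\<lambda>j. a * x j + b * y j) i = a * extend w x i + b * extend w y i"
proof (induction i rule: extend_induct[where w=w])
  case (1 i) then show ?case by (simp add: extend_generating)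
next
  case (2 i) then show ?case by (simp add: extend_nongenerating algebra_simps)
qed

lemma extend_scale: "extend w (\<lambda>j. a * x j) i = a * extend w x i"
  using extend_linear[of w a x 0 x i] by simp

lemma extend_diff: "extend w (\<lambda>j. x j - y j) i = extend w x i - extend w y i"
  using extend_linear[of w 1 x "-1" y i] by simp

lemma extend_zero: "(\<And>j. j \<le> i \<Longrightarrow> x j = 0) \<Longrightarrow> extend w x i = 0"
proof (induction i rule: extend_induct[where w=w])
  case (1 i) then show ?case by (simp add: extend_generating)
next
  case (2 i) then show ?case by (simp add: extend_nongenerating)
qed

lemma extend_Ints: "(\<And>j. x j \<in> \<int>) \<Longrightarrow> extend w x i \<in> \<int>"
proof (induction i rule: extend_induct[where w=w])
  case (1 i) then show ?case by (simp add: extend_generating)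
next
  case (2 i) then show ?case by (simp add: extend_nongenerating)
qed

lemma extend_abs_bound: "(\<And>j. \<bar>x j\<bar> \<le> M) \<Longrightarrow> \<bar>extend w x i\<bar> \<le> 3 ^ i * M"
proof (induction i rule: extend_induct[where w=w])
  case (1 i)
  have "M \<le> 3 ^ i * M" using 1(2)[of 0] by (intro mult_le_cancel_right1[THEN iffD2]) auto
  moreover have "\<bar>x i\<bar> \<le> M" by (rule 1(2))
  ultimately show ?case using 1(1) by (simp add: extend_generating)
next
  case (2 i)
  have "3 ^ (first_pos w i - 1) * M \<le> 3 ^ (i - 1) * M" "3 ^ first_pos w i * M \<le> 3 ^ (i - 1) * M"
    using 2(4) 2(9)[of 0] by (auto intro!: mult_right_mono power_increasing)
  moreover have "3 ^ i * M = 3 * (3 ^ (i - 1) * M)" using 2(3) by (cases i) auto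
  moreover have "\<bar>extend w x i\<bar> \<le> \<bar>extend w x (first_pos w i - 1)\<bar> + \<bar>extend w x (first_pos w i)\<bar>
      + \<bar>extend w x (i - 1)\<bar>"
    unfolding extend_nongenerating[OF 2(1,2)] by linarith
  ultimately show ?case using 2(6-8)[OF 2(9)] by linarith
qed

lemma extend_pair_sum:
  assumes "1 \<le> i" "i \<le> length w"
  shows "extend w x (i - 1) + extend w x i = extend w x (first_pos w i - 1) + extend w x (first_pos w i)"
proof (cases "generating w i")
  case True then show ?thesis using generating_iff_first_pos[OF assms] by simp
next
  case False then show ?thesis using extend_nongenerating[OF assms(2) False] by simp
qed

section \<open>The closing condition and symmetric words\<close>

lemma alternating_pair_sum_telescope:
  "(\<Sum>i\<in>{1..2 * m}. (-1::real) ^ i * (t (i - 1) + t i)) = t (2 * m) - t 0"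
proof (induction m)
  case 0 then show ?case by simp
next
  case (Suc m)
  have e: "{1..2 * Suc m} = insert (2 * m + 2) (insert (2 * m + 1) {1..2 * m})" by auto
  have "(\<Sum>i\<in>{1..2 * Suc m}. (-1::real) ^ i * (t (i - 1) + t i)) =
      (-1) ^ (2 * m + 2) * (t (2 * m + 1) + t (2 * m + 2)) +
      ((-1) ^ (2 * m + 1) * (t (2 * m) + t (2 * m + 1)) +
       (\<Sum>i\<in>{1..2 * m}. (-1::real) ^ i * (t (i - 1) + t i)))"
    unfolding e by (simp add: sum.insert)
  also have "\<dots> = t (2 * Suc m) - t 0" using Suc by simp
  finally show ?case .
qed

definition pair_sum :: "nat list \<Rightarrow> (nat \<Rightarrow> real) \<Rightarrow> nat \<Rightarrow> real" where
  "pair_sum w x g = extend w x (g - 1) + extend w x g"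

definition parity_balance :: "nat list \<Rightarrow> nat \<Rightarrow> real" where
  "parity_balance w a = (\<Sum>i\<in>{i\<in>{1..length w}. letter w i = a}. (-1) ^ i)"

text \<open>The alternating sum of the pair sums t(i-1) + t(i) telescopes, and for an extension
  each pair sum depends only on the letter at i.\<close>

lemma extend_closing_identity:
  assumes "length w = 2 * k"
  shows "extend w x (length w) - extend w x 0 =
      (\<Sum>a\<in>set w. pair_sum w x (first_occ w a) * parity_balance w a)"
proof -
  have "extend w x (length w) - extend w x 0 =
      (\<Sum>i\<in>{1..length w}. (-1::real) ^ i * (extend w x (i - 1) + extend w x i))"
    using alternating_pair_sum_telescope[where m=k and t="extend w x"] assms by simp
  also have "\<dots> = (\<Sum>i\<in>{1..length w}. (-1::real) ^ i * pair_sum w x (first_occ w (letter w i)))"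
  proof (rule sum.cong)
    fix i assume "i \<in> {1..length w}"
    then have "extend w x (i - 1) + extend w x i = pair_sum w x (first_occ w (letter w i))"
      unfolding pair_sum_def first_pos_def[symmetric] by (intro extend_pair_sum) auto
    then show "(-1::real) ^ i * (extend w x (i - 1) + extend w x i) =
        (-1::real) ^ i * pair_sum w x (first_occ w (letter w i))"
      by simp
  qed simp
  also have "\<dots> = (\<Sum>a\<in>set w.
      \<Sum>i\<in>{i\<in>{1..length w}. letter w i = a}. (-1::real) ^ i * pair_sum w x (first_occ w (letter w i)))"
    by (rule sum.group[symmetric]) (auto intro: letter_in_set)
  also have "\<dots> = (\<Sum>a\<in>set w. pair_sum w x (first_occ w a) * parity_balance w a)"
    unfolding parity_balance_def sum_distrib_left
      by (rule sum.cong) (auto simp: mult.commute intro!: sum.cong)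
  finally show ?thesis .
qed

lemma parity_balance_eq:
  "parity_balance w a = real (card {i \<in> {1..length w}. even i \<and> letter w i = a})
            - real (card {i \<in> {1..length w}. odd i \<and> letter w i = a})"
proof -
  let ?S = "{i\<in>{1..length w}. letter w i = a}"
  have fin: "finite ?S" by simp
  have "parity_balance w a = (\<Sum>i\<in>?S \<inter> {i. even i}. (-1::real) ^ i) + (\<Sum>i\<in>?S - {i. even i}. (-1::real) ^ i)"
    unfolding parity_balance_def by (rule sum.Int_Diff[OF fin])
  also have "(\<Sum>i\<in>?S \<inter> {i. even i}. (-1::real) ^ i) = (\<Sum>i\<in>?S \<inter> {i. even i}. 1)"
    by (rule sum.cong) auto
  also have "\<dots> = real (card {i \<in> {1..length w}. even i \<and> letter w i = a})"
    by (simp, rule arg_cong[where f=card]) auto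
  also have "(\<Sum>i\<in>?S - {i. even i}. (-1::real) ^ i) = (\<Sum>i\<in>?S - {i. even i}. -1)"
    by (rule sum.cong) auto
  also have "\<dots> = - real (card {i \<in> {1..length w}. odd i \<and> letter w i = a})"
    by (simp, rule arg_cong[where f=card]) auto
  finally show ?thesis by simp
qed

lemma symmetric_word_iff_parity_balance: "symmetric_word w \<longleftrightarrow> (\<forall>a\<in>set w. parity_balance w a = 0)"
  unfolding symmetric_word_def parity_balance_eq by auto

lemma extend_closes_if_symmetric:
  assumes "length w = 2 * k" "symmetric_word w"
  shows "extend w x (length w) = extend w x 0"
  using extend_closing_identity[OF assms(1), of x] assms(2)
    unfolding symmetric_word_iff_parity_balance by simp

definition unit_vec :: "nat \<Rightarrow> nat \<Rightarrow> real" where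
  "unit_vec g j = (if j = g then 1 else 0)"

lemma pair_sum_unit_vec_less:
  assumes "g' < g"
  shows "pair_sum w (unit_vec g) g' = 0"
proof -
  have "extend w (unit_vec g) (g' - 1) = 0" by (rule extend_zero)
    (use assms in \<open>auto simp: unit_vec_def\<close>)
  moreover have "extend w (unit_vec g) g' = 0" by (rule extend_zero)
    (use assms in \<open>auto simp: unit_vec_def\<close>)
  ultimately show ?thesis unfolding pair_sum_def by simp
qed

lemma pair_sum_unit_vec_self:
  assumes "generating w g" "1 \<le> g"
  shows "pair_sum w (unit_vec g) g = 1"
proof -
  have "extend w (unit_vec g) (g - 1) = 0" by (rule extend_zero) (use assms in \<open>auto simp: unit_vec_def\<close>)
  moreover have "extend w (unit_vec g) g = 1" using assms by (simp add: extend_generating unit_vec_def)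
  ultimately show ?thesis unfolding pair_sum_def by simp
qed

text \<open>Among the letters with nonzero parity balance take the one whose first occurrence g is
  last; the unit vector at g leaves only its term in the closing identity.\<close>

lemma extend_not_closing_if_not_symmetric:
  assumes "length w = 2 * k" "\<not> symmetric_word w"
  shows "\<exists>x. extend w x (length w) - extend w x 0 \<noteq> 0"
proof -
  define S where "S = {a \<in> set w. parity_balance w a \<noteq> 0}"
  have Sne: "S \<noteq> {}" using assms(2) unfolding symmetric_word_iff_parity_balance S_def by auto
  have fS: "finite S" unfolding S_def by auto
  define gs where "gs = Max (first_occ w ` S)"
  have "gs \<in> first_occ w ` S" unfolding gs_def using Sne fS by (intro Max_in) auto
  then obtain a where a: "a \<in> S" "first_occ w a = gs" by auto
  have amax: "first_occ w b \<le> gs" if "b \<in> S" for b unfolding gs_def using that fS by (intro Max_ge) auto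
  have aw: "a \<in> set w" "parity_balance w a \<noteq> 0" using a unfolding S_def by auto
  have "(\<Sum>b\<in>set w. pair_sum w (unit_vec gs) (first_occ w b) * parity_balance w b) =
      (\<Sum>b\<in>set w. if b = a then parity_balance w a else 0)"
  proof (rule sum.cong)
    fix b assume b: "b \<in> set w"
    show "pair_sum w (unit_vec gs) (first_occ w b) * parity_balance w b =
        (if b = a then parity_balance w a else 0)"
    proof (cases "b = a")
      case True
      then show ?thesis
        using pair_sum_unit_vec_self[OF generating_first_occ[OF aw(1)]] first_occ_props[OF aw(1)] a(2) by simp
    next
      case False
      then have ne: "first_occ w b \<noteq> gs" using a(2) inj_on_first_occ[of w] b aw(1)
        by (metis inj_on_eq_iff)
      show ?thesis
      proof (cases "parity_balance w b = 0")
        case False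
        then have "b \<in> S" using b unfolding S_def by auto
        then have "first_occ w b < gs" using amax ne by fastforce
        then show ?thesis using pair_sum_unit_vec_less \<open>b \<noteq> a\<close> by simp
      qed (use \<open>b \<noteq> a\<close> in simp)
    qed
  qed simp
  also have "\<dots> = parity_balance w a" using aw(1) by simp
  finally have "extend w (unit_vec gs) (length w) - extend w (unit_vec gs) 0 \<noteq> 0"
    using extend_closing_identity[OF assms(1), of "unit_vec gs"] aw(2) by simp
  then show ?thesis by blast
qed

lemma pair_sum_separates_letters:
  assumes "1 \<le> i" "i \<le> length w" "1 \<le> j" "j \<le> length w" "letter w i \<noteq> letter w j"
  shows "\<exists>x. pair_sum w x (first_pos w i) - pair_sum w x (first_pos w j) \<noteq> 0"
proof -
  have ne: "first_pos w i \<noteq> first_pos w j" using first_pos_eq_iff[OF assms(1,3)] assms(5) by simp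
  have gi: "generating w (first_pos w i)" "1 \<le> first_pos w i"
    using generating_first_pos first_pos_props assms by auto
  have gj: "generating w (first_pos w j)" "1 \<le> first_pos w j"
    using generating_first_pos first_pos_props assms by auto
  show ?thesis
  proof (cases "first_pos w i < first_pos w j")
    case True
    then show ?thesis using pair_sum_unit_vec_less[OF True] pair_sum_unit_vec_self[OF gj]
      by (intro exI[of _ "unit_vec (first_pos w j)"]) simp
  next
    case False
    then have lt: "first_pos w j < first_pos w i" using ne by simp
    then show ?thesis using pair_sum_unit_vec_less[OF lt] pair_sum_unit_vec_self[OF gi]
      by (intro exI[of _ "unit_vec (first_pos w i)"]) simp
  qed
qed

definition int_linear_form :: "nat list \<Rightarrow> ((nat \<Rightarrow> real) \<Rightarrow> real) \<Rightarrow> bool" where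
  "int_linear_form w f \<longleftrightarrow> (\<exists>\<gamma>. (\<forall>j\<in>gen_vertices w. \<gamma> j \<in> \<int>) \<and> (\<forall>x. f x = (\<Sum>j\<in>gen_vertices w. x j * \<gamma> j)))"

lemma int_linear_form_add:
  assumes "int_linear_form w f" "int_linear_form w g" shows "int_linear_form w (\<lambda>x. f x + g x)"
proof -
  obtain a where a: "\<forall>j\<in>gen_vertices w. a j \<in> \<int>" "\<forall>x. f x = (\<Sum>j\<in>gen_vertices w. x j * a j)"
    using assms(1) unfolding int_linear_form_def by auto
  obtain b where b: "\<forall>j\<in>gen_vertices w. b j \<in> \<int>" "\<forall>x. g x = (\<Sum>j\<in>gen_vertices w. x j * b j)"
    using assms(2) unfolding int_linear_form_def by auto
  show ?thesis unfolding int_linear_form_def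
    by (rule exI[of _ "\<lambda>j. a j + b j"]) (use a b in \<open>auto simp: distrib_left sum.distrib\<close>)
qed

lemma int_linear_form_scale:
  assumes "int_linear_form w f" "c \<in> \<int>" shows "int_linear_form w (\<lambda>x. c * f x)"
proof -
  obtain a where a: "\<forall>j\<in>gen_vertices w. a j \<in> \<int>" "\<forall>x. f x = (\<Sum>j\<in>gen_vertices w. x j * a j)"
    using assms(1) unfolding int_linear_form_def by auto
  show ?thesis unfolding int_linear_form_def
    by (rule exI[of _ "\<lambda>j. c * a j"]) (use a assms(2) in \<open>auto simp: sum_distrib_left mult_ac\<close>)
qed

lemma int_linear_form_diff:
  assumes "int_linear_form w f" "int_linear_form w g" shows "int_linear_form w (\<lambda>x. f x - g x)"
proof -
  have "int_linear_form w (\<lambda>x. (-1) * g x)" by (rule int_linear_form_scale[OF assms(2)]) simp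
  from int_linear_form_add[OF assms(1) this] show ?thesis by simp
qed

lemma int_linear_form_extend: "i \<le> length w \<Longrightarrow> int_linear_form w (\<lambda>x. extend w x i)"
proof (induction i rule: extend_induct[where w=w])
  case (1 i)
  then have iG: "i \<in> gen_vertices w" unfolding gen_vertices_def by auto
  show ?case unfolding int_linear_form_def
  proof (rule exI[of _ "unit_vec i"], intro conjI allI ballI)
    show "unit_vec i j \<in> \<int>" for j by (simp add: unit_vec_def)
    fix x show "extend w x i = (\<Sum>j\<in>gen_vertices w. x j * unit_vec i j)"
      using 1 iG finite_gen_vertices[of w]
        by (simp add: extend_generating unit_vec_def if_distrib cong: if_cong)
  qed
next
  case (2 i)
  have "int_linear_form w (\<lambda>x. extend w x (first_pos w i - 1) + extend w x (first_pos w i)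
      - extend w x (i - 1))"
    using 2 by (intro int_linear_form_diff int_linear_form_add) auto
  then show ?case using 2 by (simp add: extend_nongenerating)
qed

lemma int_linear_form_pair_sum: "1 \<le> i \<Longrightarrow> i \<le> length w \<Longrightarrow> int_linear_form w (\<lambda>x. pair_sum w x (first_pos w i))"
  unfolding pair_sum_def using first_pos_props[of i w]
    by (intro int_linear_form_add int_linear_form_extend) auto

lemma int_linear_form_nonzero_coeffs:
  assumes "int_linear_form w f" "\<exists>x. f x \<noteq> 0"
  shows "\<exists>\<gamma>. (\<forall>j\<in>gen_vertices w. \<gamma> j \<in> \<int>) \<and>
      (\<exists>j\<in>gen_vertices w. \<gamma> j \<noteq> 0) \<and> (\<forall>x. f x = (\<Sum>j\<in>gen_vertices w. x j * \<gamma> j))"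
proof -
  obtain g where g: "\<forall>j\<in>gen_vertices w. g j \<in> \<int>" "\<forall>x. f x = (\<Sum>j\<in>gen_vertices w. x j * g j)"
    using assms(1) unfolding int_linear_form_def by auto
  obtain x where x: "f x \<noteq> 0" using assms(2) by auto
  have "\<exists>j\<in>gen_vertices w. g j \<noteq> 0"
  proof (rule ccontr)
    assume "\<not> (\<exists>j\<in>gen_vertices w. g j \<noteq> 0)"
    then have "(\<Sum>j\<in>gen_vertices w. x j * g j) = 0" by (intro sum.neutral) auto
    then show False using x g(2) by simp
  qed
  then show ?thesis using g by blast
qed


section \<open>Circuits as lattice points\<close>

definition signed_link :: "int \<Rightarrow> int \<Rightarrow> nat \<Rightarrow> nat \<Rightarrow> int" where
  "signed_link s1 s2 i j = (if i \<ge> j then s1 else s2) * int (i + j)"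

lemma L_Hs_eq_signed_link: "L_Hs = signed_link 1 1"
  by (auto simp: fun_eq_iff L_Hs_def signed_link_def)

lemma L_H_eq_signed_link: "L_H = signed_link 1 (-1)"
  by (auto simp: fun_eq_iff L_H_def signed_link_def)

definition signed_link_real :: "int \<Rightarrow> int \<Rightarrow> real \<Rightarrow> real \<Rightarrow> real" where
  "signed_link_real s1 s2 a b = (if a \<ge> b then of_int s1 else of_int s2) * (a + b)"

definition real_xi :: "int \<Rightarrow> int \<Rightarrow> (nat \<Rightarrow> real) \<Rightarrow> nat \<Rightarrow> real" where
  "real_xi s1 s2 t i = (if odd i then signed_link_real s1 s2 (t (i - 1)) (t i)
      else signed_link_real s1 s2 (t i) (t (i - 1)))"

lemma of_int_xi_signed_link: "real_of_int (xi (signed_link s1 s2) \<pi> i) = real_xi s1 s2 (\<lambda>j. real (\<pi> j)) i"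
  by (simp add: xi_def real_xi_def signed_link_def signed_link_real_def)

lemma abs_xi_signed_link:
  assumes "\<bar>s1\<bar> = 1" "\<bar>s2\<bar> = 1"
  shows "\<bar>xi (signed_link s1 s2) \<pi> i\<bar> = int (\<pi> (i - 1) + \<pi> i)"
  using assms by (auto simp: xi_def signed_link_def abs_mult)

definition real_circuit :: "int \<Rightarrow> int \<Rightarrow> nat list \<Rightarrow> nat \<Rightarrow> nat \<Rightarrow> (nat \<Rightarrow> real) \<Rightarrow> bool" where
  "real_circuit s1 s2 w P N t \<longleftrightarrow>
     (\<forall>i \<le> length w. 1 \<le> t i \<and> t i \<le> (if even i then real P else real N)) \<and>
     t (length w) = t 0 \<and>
     (\<forall>i \<in> {1..length w}. \<forall>j \<in> {1..length w}.
        (letter w i = letter w j) = (real_xi s1 s2 t i = real_xi s1 s2 t j))"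

lemma real_xi_cong: "t (i - 1) = t' (i - 1) \<Longrightarrow> t i = t' i \<Longrightarrow> real_xi s1 s2 t i = real_xi s1 s2 t' i"
  by (simp add: real_xi_def)

lemma real_circuit_cong:
  assumes "\<And>i. i \<le> length w \<Longrightarrow> t i = t' i"
  shows "real_circuit s1 s2 w P N t = real_circuit s1 s2 w P N t'"
proof -
  have "\<And>i. i \<in> {1..length w} \<Longrightarrow> real_xi s1 s2 t i = real_xi s1 s2 t' i"
    by (rule real_xi_cong) (use assms in auto)
  then show ?thesis unfolding real_circuit_def using assms by (auto simp del: atLeastAtMost_iff)
qed

lemma circuits_iff:
  assumes "length w = 2 * k"
  shows "\<pi> \<in> circuits P N k \<longleftrightarrow> (\<forall>i > length w. \<pi> i = 0) \<and> \<pi> 0 = \<pi> (length w) \<and>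
      (\<forall>i \<le> length w. 1 \<le> \<pi> i \<and> \<pi> i \<le> (if even i then P else N))"
proof
  assume c: "\<pi> \<in> circuits P N k"
  have "1 \<le> \<pi> i \<and> \<pi> i \<le> (if even i then P else N)" if "i \<le> length w" for i
  proof (cases "even i")
    case True
    then obtain h where "i = 2 * h" by auto
    then show ?thesis using c that True assms unfolding circuits_def by auto
  next
    case False
    then obtain h where h: "i = 2 * h + 1" using oddE by blast
    then have "i = 2 * (h + 1) - 1" "1 \<le> h + 1" "h + 1 \<le> k" using that assms by auto
    moreover have "1 \<le> \<pi> (2 * (h + 1) - 1) \<and> \<pi> (2 * (h + 1) - 1) \<le> N"
      using c \<open>1 \<le> h + 1\<close> \<open>h + 1 \<le> k\<close> unfolding circuits_def by blast
    ultimately show ?thesis using False by simp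
  qed
  then show "(\<forall>i > length w. \<pi> i = 0) \<and> \<pi> 0 = \<pi> (length w) \<and>
      (\<forall>i \<le> length w. 1 \<le> \<pi> i \<and> \<pi> i \<le> (if even i then P else N))"
    using c assms unfolding circuits_def by auto
next
  assume r: "(\<forall>i > length w. \<pi> i = 0) \<and> \<pi> 0 = \<pi> (length w) \<and>
      (\<forall>i \<le> length w. 1 \<le> \<pi> i \<and> \<pi> i \<le> (if even i then P else N))"
  have a: "1 \<le> \<pi> (2 * i) \<and> \<pi> (2 * i) \<le> P" if "i \<le> k" for i
    using r[THEN conjunct2, THEN conjunct2, rule_format, of "2 * i"] that assms by auto
  have b: "1 \<le> \<pi> (2 * i - 1) \<and> \<pi> (2 * i - 1) \<le> N" if "1 \<le> i" "i \<le> k" for i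
  proof -
    have "odd (2 * i - 1)" using that by auto
    then show ?thesis
      using r[THEN conjunct2, THEN conjunct2, rule_format, of "2 * i - 1"] that assms by auto
  qed
  show "\<pi> \<in> circuits P N k" unfolding circuits_def using r a b assms by auto
qed

definition gen_restrict :: "nat list \<Rightarrow> (nat \<Rightarrow> nat) \<Rightarrow> nat \<Rightarrow> int" where
  "gen_restrict w \<pi> = restrict (\<lambda>j. int (\<pi> j)) (gen_vertices w)"

definition gen_values :: "int \<Rightarrow> int \<Rightarrow> nat list \<Rightarrow> nat \<Rightarrow> nat \<Rightarrow> (nat \<Rightarrow> int) set" where
  "gen_values s1 s2 w P N = gen_restrict w ` Pi_S (signed_link s1 s2) P N w"

context
  fixes s1 s2 :: int and w :: "nat list" and k :: nat
  assumes s1: "\<bar>s1\<bar> = 1" and s2: "\<bar>s2\<bar> = 1" and lenw: "length w = 2 * k"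
begin

lemma half_length: "length w div 2 = k" using lenw by simp

lemma extend_gen_restrict:
  assumes "\<pi> \<in> Pi_S (signed_link s1 s2) P N w"
  shows "i \<le> length w \<Longrightarrow> extend w (\<lambda>j. real_of_int (gen_restrict w \<pi> j)) i = real (\<pi> i)"
proof (induction i rule: extend_induct[where w=w])
  case (1 i)
  then have "i \<in> gen_vertices w" unfolding gen_vertices_def by auto
  then show ?case using 1 by (simp add: extend_generating gen_restrict_def)
next
  case (2 i)
  have fi: "1 \<le> first_pos w i" "first_pos w i \<le> length w" "letter w (first_pos w i) = letter w i"
    using first_pos_props[OF 2(3), of w] 2 by auto
  have "xi (signed_link s1 s2) \<pi> i = xi (signed_link s1 s2) \<pi> (first_pos w i)"
    using assms fi 2 unfolding Pi_S_def by auto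
  then have "int (\<pi> (i - 1) + \<pi> i) = int (\<pi> (first_pos w i - 1) + \<pi> (first_pos w i))"
    using abs_xi_signed_link[OF s1 s2, of \<pi>] by metis
  then have "real (\<pi> (i - 1)) + real (\<pi> i) = real (\<pi> (first_pos w i - 1)) + real (\<pi> (first_pos w i))"
    by (metis of_nat_add of_nat_eq_iff)
  then show ?case using 2 by (simp add: extend_nongenerating)
qed

lemma Pi_S_real_circuit:
  assumes "\<pi> \<in> Pi_S (signed_link s1 s2) P N w"
  shows "real_circuit s1 s2 w P N (extend w (\<lambda>j. real_of_int (gen_restrict w \<pi> j)))"
proof -
  have "real_circuit s1 s2 w P N (extend w (\<lambda>j. real_of_int (gen_restrict w \<pi> j)))
      = real_circuit s1 s2 w P N (\<lambda>j. real (\<pi> j))"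
    by (rule real_circuit_cong) (rule extend_gen_restrict[OF assms])
  moreover have "real_circuit s1 s2 w P N (\<lambda>j. real (\<pi> j))"
  proof -
    have c: "\<pi> \<in> circuits P N k" and e: "\<forall>i\<in>{1..length w}. \<forall>j\<in>{1..length w}.
        (letter w i = letter w j) = (xi (signed_link s1 s2) \<pi> i = xi (signed_link s1 s2) \<pi> j)"
      using assms unfolding Pi_S_def half_length by auto
    note ci = c[unfolded circuits_iff[OF lenw]]
    have e2: "\<forall>i\<in>{1..length w}. \<forall>j\<in>{1..length w}.
        (letter w i = letter w j) = (real_xi s1 s2 (\<lambda>j. real (\<pi> j)) i = real_xi s1 s2 (\<lambda>j. real (\<pi> j)) j)"
      using e by (simp add: of_int_xi_signed_link[symmetric])
    show ?thesis unfolding real_circuit_def using ci e2 by auto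
  qed
  ultimately show ?thesis by simp
qed

lemma real_circuit_in_gen_values:
  assumes m: "m \<in> (gen_vertices w) \<rightarrow>\<^sub>E (UNIV :: int set)"
    and C: "real_circuit s1 s2 w P N (extend w (\<lambda>j. real_of_int (m j)))"
  shows "m \<in> gen_values s1 s2 w P N"
proof -
  define t where "t = extend w (\<lambda>j. real_of_int (m j))"
  have tint: "t i \<in> \<int>" for i unfolding t_def by (rule extend_Ints) simp
  define \<pi> where "\<pi> i = (if i \<le> length w then nat \<lfloor>t i\<rfloor> else 0)" for i
  have Ct: "real_circuit s1 s2 w P N t" using C t_def by simp
  have pt: "real (\<pi> i) = t i" if "i \<le> length w" for i
  proof -
    obtain z where z: "t i = of_int z" using tint[of i] Ints_cases by blast
    have "1 \<le> t i" using Ct that unfolding real_circuit_def by auto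
    then show ?thesis using z that unfolding \<pi>_def by simp
  qed
  have Cp: "real_circuit s1 s2 w P N (\<lambda>j. real (\<pi> j))"
    using Ct real_circuit_cong[of w t "\<lambda>j. real (\<pi> j)"] pt by simp
  have inc: "\<pi> \<in> circuits P N k"
    unfolding circuits_iff[OF lenw]
  proof (intro conjI allI impI)
    show "\<pi> i = 0" if "length w < i" for i using that unfolding \<pi>_def by simp
    show "\<pi> 0 = \<pi> (length w)" using Cp unfolding real_circuit_def by simp
    fix i assume i: "i \<le> length w"
    have "1 \<le> \<pi> i \<and> \<pi> i \<le> (if even i then P else N)"
      using Cp i unfolding real_circuit_def by auto
    then show "1 \<le> \<pi> i" "\<pi> i \<le> (if even i then P else N)" by auto
  qed
  have inP: "\<pi> \<in> Pi_S (signed_link s1 s2) P N w"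
    unfolding Pi_S_def half_length using inc Cp unfolding real_circuit_def
      by (simp add: of_int_xi_signed_link[symmetric])
  have "gen_restrict w \<pi> = m"
  proof
    fix j show "gen_restrict w \<pi> j = m j"
    proof (cases "j \<in> gen_vertices w")
      case True
      then have jl: "j \<le> length w" "generating w j" unfolding gen_vertices_def by auto
      have "real (\<pi> j) = real_of_int (m j)" using pt[OF jl(1)] unfolding t_def using jl
        by (simp add: extend_generating)
      then show ?thesis using True unfolding gen_restrict_def by simp
    next
      case False then show ?thesis using m unfolding gen_restrict_def
        by (auto simp: PiE_def extensional_def)
    qed
  qed
  then show ?thesis using inP unfolding gen_values_def by blast
qed

lemma gen_values_iff:
  "m \<in> gen_values s1 s2 w P N \<longleftrightarrow>
      m \<in> (gen_vertices w) \<rightarrow>\<^sub>E (UNIV :: int set) \<and> real_circuit s1 s2 w P N (extend w (\<lambda>j. real_of_int (m j)))"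
proof
  assume "m \<in> gen_values s1 s2 w P N"
  then obtain \<pi> where p: "\<pi> \<in> Pi_S (signed_link s1 s2) P N w" "m = gen_restrict w \<pi>"
    unfolding gen_values_def by auto
  then show "m \<in> (gen_vertices w) \<rightarrow>\<^sub>E (UNIV :: int set) \<and>
      real_circuit s1 s2 w P N (extend w (\<lambda>j. real_of_int (m j)))"
    using Pi_S_real_circuit[OF p(1)] unfolding gen_restrict_def by auto
next
  assume "m \<in> (gen_vertices w) \<rightarrow>\<^sub>E (UNIV :: int set) \<and>
      real_circuit s1 s2 w P N (extend w (\<lambda>j. real_of_int (m j)))"
  then show "m \<in> gen_values s1 s2 w P N" using real_circuit_in_gen_values by auto
qed

lemma card_gen_values: "card (gen_values s1 s2 w P N) = card (Pi_S (signed_link s1 s2) P N w)"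
  unfolding gen_values_def
proof (rule card_image, rule inj_onI)
  fix \<pi> \<pi>' assume a: "\<pi> \<in> Pi_S (signed_link s1 s2) P N w"
      "\<pi>' \<in> Pi_S (signed_link s1 s2) P N w" "gen_restrict w \<pi> = gen_restrict w \<pi>'"
  show "\<pi> = \<pi>'"
  proof
    fix i show "\<pi> i = \<pi>' i"
    proof (cases "i \<le> length w")
      case True
      then show ?thesis
        using extend_gen_restrict[OF a(1) True] extend_gen_restrict[OF a(2) True] a(3) by simp
    next
      case False
      have "\<pi> \<in> circuits P N k" "\<pi>' \<in> circuits P N k" using a unfolding Pi_S_def half_length by auto
      then show ?thesis using False unfolding circuits_iff[OF lenw] by auto
    qed
  qed
qed

lemma gen_values_subset: "gen_values s1 s2 w P N \<subseteq> (gen_vertices w) \<rightarrow>\<^sub>E {1..int (max P N)}"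
proof
  fix m assume "m \<in> gen_values s1 s2 w P N"
  then obtain \<pi> where p: "\<pi> \<in> Pi_S (signed_link s1 s2) P N w" "m = gen_restrict w \<pi>"
    unfolding gen_values_def by auto
  have "\<pi> \<in> circuits P N k" using p unfolding Pi_S_def half_length by auto
  then have r: "\<forall>i \<le> length w. 1 \<le> \<pi> i \<and> \<pi> i \<le> max P N"
    unfolding circuits_iff[OF lenw] by (metis max.coboundedI1 max.coboundedI2)
  show "m \<in> (gen_vertices w) \<rightarrow>\<^sub>E {1..int (max P N)}"
    using r p(2) unfolding gen_restrict_def gen_vertices_def by (auto simp: PiE_def extensional_def)
qed

lemma finite_gen_values: "finite (gen_values s1 s2 w P N)"
  by (rule finite_subset[OF gen_values_subset]) (auto intro!: finite_PiE finite_gen_vertices)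

end

definition lattice_point :: "nat list \<Rightarrow> nat \<Rightarrow> (nat \<Rightarrow> real) \<Rightarrow> (nat \<Rightarrow> int)" where
  "lattice_point w n u = restrict (\<lambda>j. \<lceil>real n * u j\<rceil>) (gen_vertices w)"

definition grid_round :: "nat \<Rightarrow> (nat \<Rightarrow> real) \<Rightarrow> nat \<Rightarrow> real" where
  "grid_round n u j = real_of_int \<lceil>real n * u j\<rceil> / real n"

text \<open>A generic point lies on none of the countably many hyperplanes on which a nonzero integer
  linear form takes one of the values 0, 1 or y; these are the values that the constraints
  defining Pi_S compare such forms with.\<close>

definition generic :: "nat list \<Rightarrow> real \<Rightarrow> (nat \<Rightarrow> real) \<Rightarrow> bool" where
  "generic w y u \<longleftrightarrow> (\<forall>\<gamma>. (\<forall>j\<in>gen_vertices w. \<gamma> j \<in> \<int>) \<longrightarrow> (\<exists>j\<in>gen_vertices w. \<gamma> j \<noteq> 0) \<longrightarrow>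
      (\<Sum>j\<in>gen_vertices w. u j * \<gamma> j) \<notin> {0, 1, y})"

definition eventually_const :: "(nat \<Rightarrow> bool) \<Rightarrow> bool" where
  "eventually_const P \<longleftrightarrow> (\<exists>c. eventually (\<lambda>n. P n = c) sequentially)"

lemma eventually_const_const: "eventually_const (\<lambda>n. c)"
  unfolding eventually_const_def by auto

lemma eventually_const_cong:
  "eventually (\<lambda>n. P n = Q n) sequentially \<Longrightarrow> eventually_const Q \<Longrightarrow> eventually_const P"
  unfolding eventually_const_def by (auto elim: eventually_elim2)

lemma eventually_const_cong_pos:
  assumes "\<And>n. n > 0 \<Longrightarrow> P n = Q n" "eventually_const Q"
  shows "eventually_const P"
proof (rule eventually_const_cong[OF _ assms(2)])
  show "eventually (\<lambda>n. P n = Q n) sequentially"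
    using eventually_gt_at_top[of "0::nat"] by eventually_elim (rule assms(1))
qed

lemma eventually_const_binop:
  assumes "eventually_const P" "eventually_const Q"
  shows "eventually_const (\<lambda>n. h (P n) (Q n))"
proof -
  obtain c d where "eventually (\<lambda>n. P n = c) sequentially" "eventually (\<lambda>n. Q n = d) sequentially"
    using assms unfolding eventually_const_def by auto
  then have "eventually (\<lambda>n. h (P n) (Q n) = h c d) sequentially" by eventually_elim simp
  then show ?thesis unfolding eventually_const_def by auto
qed

lemma eventually_const_ball:
  assumes "finite S" "\<And>i. i \<in> S \<Longrightarrow> eventually_const (P i)"
  shows "eventually_const (\<lambda>n. \<forall>i\<in>S. P i n)"
proof -
  obtain c where c: "\<And>i. i \<in> S \<Longrightarrow> eventually (\<lambda>n. P i n = c i) sequentially"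
    using assms(2) unfolding eventually_const_def by metis
  have "eventually (\<lambda>n. \<forall>i\<in>S. P i n = c i) sequentially"
    using assms(1) c by (intro eventually_ball_finite) auto
  then have "eventually (\<lambda>n. (\<forall>i\<in>S. P i n) = (\<forall>i\<in>S. c i)) sequentially"
    by eventually_elim simp
  then show ?thesis unfolding eventually_const_def by auto
qed

lemma eventually_less_of_tendsto_less:
  fixes a b :: "nat \<Rightarrow> real"
  assumes "a \<longlonglongrightarrow> L" "b \<longlonglongrightarrow> M" "L < M"
  shows "eventually (\<lambda>n. a n < b n) sequentially"
proof -
  have "(\<lambda>n. b n - a n) \<longlonglongrightarrow> M - L" by (intro tendsto_diff assms)
  then have "eventually (\<lambda>n. 0 < b n - a n) sequentially" using assms(3)
    by (intro order_tendstoD(1)) auto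
  then show ?thesis by eventually_elim simp
qed

lemma eventually_const_le_of_tendsto:
  fixes a b :: "nat \<Rightarrow> real"
  assumes "a \<longlonglongrightarrow> L" "b \<longlonglongrightarrow> M" "L \<noteq> M"
  shows "eventually_const (\<lambda>n. a n \<le> b n)"
proof (cases "L < M")
  case True
  with eventually_less_of_tendsto_less[OF assms(1,2)]
  have "eventually (\<lambda>n. (a n \<le> b n) = True) sequentially" by (auto elim: eventually_mono)
  then show ?thesis unfolding eventually_const_def by blast
next
  case False
  with eventually_less_of_tendsto_less[OF assms(2,1)] assms(3)
  have "eventually (\<lambda>n. (a n \<le> b n) = False) sequentially" by (auto elim: eventually_mono)
  then show ?thesis unfolding eventually_const_def by blast
qed

lemma ceiling_grid_tendsto: "(\<lambda>n. real_of_int \<lceil>real n * a\<rceil> / real n) \<longlonglongrightarrow> a"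
proof (rule tendsto_sandwich[of "\<lambda>n. a" _ _ "\<lambda>n. a + 1 / real n"])
  show "eventually (\<lambda>n. a \<le> real_of_int \<lceil>real n * a\<rceil> / real n) sequentially"
    using eventually_gt_at_top[of 0]
  proof eventually_elim
    case (elim n) then have "real n * a \<le> real_of_int \<lceil>real n * a\<rceil>" by simp
    with elim show ?case by (simp add: field_simps)
  qed
  show "eventually (\<lambda>n. real_of_int \<lceil>real n * a\<rceil> / real n \<le> a + 1 / real n) sequentially"
    using eventually_gt_at_top[of 0]
  proof eventually_elim
    case (elim n) then have "real_of_int \<lceil>real n * a\<rceil> \<le> real n * a + 1" by linarith
    with elim show ?case by (simp add: field_simps)
  qed
  show "(\<lambda>n. a + 1 / real n) \<longlonglongrightarrow> a" using tendsto_add[OF tendsto_const lim_1_over_n, of a] by simp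
qed simp

lemma int_linear_form_grid_round_tendsto:
  assumes "int_linear_form w f"
  shows "(\<lambda>n. f (grid_round n u)) \<longlonglongrightarrow> f u"
proof -
  obtain g where g: "\<forall>x. f x = (\<Sum>j\<in>gen_vertices w. x j * g j)"
    using assms unfolding int_linear_form_def by auto
  have "(\<lambda>n. \<Sum>j\<in>gen_vertices w. grid_round n u j * g j) \<longlonglongrightarrow> (\<Sum>j\<in>gen_vertices w. u j * g j)"
    by (intro tendsto_sum tendsto_mult_right) (simp add: grid_round_def ceiling_grid_tendsto)
  then show ?thesis using g by simp
qed

lemma generic_int_linear_form:
  assumes "generic w y u" "int_linear_form w f"
  shows "(\<forall>x. f x = 0) \<or> f u \<notin> {0, 1, y}"
proof (cases "\<exists>x. f x \<noteq> 0")
  case True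
  from int_linear_form_nonzero_coeffs[OF assms(2) True] obtain g where
    "\<forall>j\<in>gen_vertices w. g j \<in> \<int>" "\<exists>j\<in>gen_vertices w. g j \<noteq> 0" "\<forall>x. f x = (\<Sum>j\<in>gen_vertices w. x j * g j)"
    by auto
  then show ?thesis using assms(1) unfolding generic_def by auto
qed simp

context
  fixes w :: "nat list" and y :: real and u :: "nat \<Rightarrow> real"
  assumes gen: "generic w y u"
begin

lemma eventually_const_int_linear_form_nonneg:
  assumes f: "int_linear_form w f"
  shows "eventually_const (\<lambda>n. 0 \<le> f (grid_round n u))"
proof (cases "\<forall>x. f x = 0")
  case False
  then have "0 \<noteq> f u" using generic_int_linear_form[OF gen f] by auto
  then show ?thesis
    by (rule eventually_const_le_of_tendsto[OF tendsto_const int_linear_form_grid_round_tendsto[OF f]])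
qed (simp add: eventually_const_const)

lemma eventually_const_int_linear_form_eq_zero:
  assumes f: "int_linear_form w f"
  shows "eventually_const (\<lambda>n. f (grid_round n u) = 0)"
proof -
  have "int_linear_form w (\<lambda>x. - f x)" using int_linear_form_scale[OF f, of "-1"] by simp
  from eventually_const_binop[OF eventually_const_int_linear_form_nonneg[OF f]
      eventually_const_int_linear_form_nonneg[OF this], of "(\<and>)"]
  show ?thesis by (rule eventually_const_cong[rotated]) (intro always_eventually allI, linarith)
qed

lemma eventually_const_int_linear_form_ge_one:
  assumes f: "int_linear_form w f"
  shows "eventually_const (\<lambda>n. 1 \<le> real n * f (grid_round n u))"
proof (cases "\<forall>x. f x = 0")
  case False
  then have "0 \<noteq> f u" using generic_int_linear_form[OF gen f] by auto
  with lim_1_over_n have "eventually_const (\<lambda>n. 1 / real n \<le> f (grid_round n u))"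
    by (rule eventually_const_le_of_tendsto[OF _ int_linear_form_grid_round_tendsto[OF f]])
  then show ?thesis by (rule eventually_const_cong_pos[rotated]) (simp add: field_simps)
qed (simp add: eventually_const_const)

lemma eventually_const_int_linear_form_le_scaled:
  assumes f: "int_linear_form w f" and c: "(\<lambda>n. c n / real n) \<longlonglongrightarrow> \<rho>" "\<rho> \<in> {1, y}"
    and c_nonneg: "\<And>n. 0 \<le> c n"
  shows "eventually_const (\<lambda>n. real n * f (grid_round n u) \<le> c n)"
proof (cases "\<forall>x. f x = 0")
  case False
  then have "f u \<noteq> \<rho>" using generic_int_linear_form[OF gen f] c(2) by auto
  then have "eventually_const (\<lambda>n. f (grid_round n u) \<le> c n / real n)"
    by (rule eventually_const_le_of_tendsto[OF int_linear_form_grid_round_tendsto[OF f] c(1)])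
  then show ?thesis by (rule eventually_const_cong_pos[rotated]) (simp add: field_simps)
qed (use c_nonneg in \<open>simp add: eventually_const_const\<close>)

end

lemma lattice_point_PiE: "lattice_point w n u \<in> gen_vertices w \<rightarrow>\<^sub>E (UNIV :: int set)"
  unfolding lattice_point_def by auto

lemma extend_lattice_point:
  assumes "n > 0" "i \<le> length w"
  shows "extend w (\<lambda>j. real_of_int (lattice_point w n u j)) i = real n * extend w (grid_round n u) i"
proof -
  have "extend w (\<lambda>j. real_of_int (lattice_point w n u j)) i = extend w (\<lambda>j. real n * grid_round n u j) i"
    by (rule extend_cong[OF _ assms(2)]) (use assms(1) in \<open>simp add: lattice_point_def grid_round_def\<close>)
  then show ?thesis by (simp add: extend_scale)
qed

lemma signed_link_real_scale:
  "c > 0 \<Longrightarrow> signed_link_real s1 s2 (c * a) (c * b) = c * signed_link_real s1 s2 a b"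
  by (simp add: signed_link_real_def algebra_simps)

lemma real_xi_scale: "c > 0 \<Longrightarrow> real_xi s1 s2 (\<lambda>i. c * t i) i = c * real_xi s1 s2 t i"
  by (simp add: real_xi_def signed_link_real_scale)

definition even_end :: "nat \<Rightarrow> nat" where
  "even_end i = (if odd i then i - 1 else i)"

definition odd_end :: "nat \<Rightarrow> nat" where
  "odd_end i = (if odd i then i else i - 1)"

lemma real_xi_eq_sign:
  "real_xi s1 s2 t i = real_of_int (if t (even_end i) \<ge> t (odd_end i) then s1 else s2) * (t (i - 1) + t i)"
  by (simp add: real_xi_def signed_link_real_def even_end_def odd_end_def algebra_simps)

lemma real_xi_unsigned: "real_xi 1 1 t i = t (i - 1) + t i"
  by (simp add: real_xi_def signed_link_real_def)

lemma tendsto_of_nat_div_self: "(\<lambda>n. real n / real n) \<longlonglongrightarrow> 1"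
proof (rule tendsto_eventually)
  show "eventually (\<lambda>n. real n / real n = 1) sequentially"
    using eventually_gt_at_top[of "0::nat"] by eventually_elim simp
qed

context
  fixes s1 s2 :: int and w :: "nat list" and k :: nat
  assumes s1: "\<bar>s1\<bar> = 1" and s2: "\<bar>s2\<bar> = 1" and lenw: "length w = 2 * k"
begin

lemma lattice_point_in_gen_values_iff:
  assumes "n > 0"
  shows "lattice_point w n u \<in> gen_values s1 s2 w P N \<longleftrightarrow>
    real_circuit s1 s2 w P N (\<lambda>i. real n * extend w (grid_round n u) i)"
proof -
  have "lattice_point w n u \<in> gen_values s1 s2 w P N \<longleftrightarrow>
      real_circuit s1 s2 w P N (extend w (\<lambda>j. real_of_int (lattice_point w n u j)))"
    using gen_values_iff[OF s1 s2 lenw] lattice_point_PiE by blast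
  also have "\<dots> \<longleftrightarrow> real_circuit s1 s2 w P N (\<lambda>i. real n * extend w (grid_round n u) i)"
    by (rule real_circuit_cong) (use extend_lattice_point assms in auto)
  finally show ?thesis .
qed

lemma lattice_point_in_gen_values_bounds:
  assumes "lattice_point w n u \<in> gen_values s1 s2 w P N" "n > 0" "j \<in> gen_vertices w"
  shows "0 \<le> u j" "u j \<le> real (max P N) / real n"
proof -
  have "lattice_point w n u j \<in> {1..int (max P N)}"
    using gen_values_subset[OF s1 s2 lenw] assms(1,3) by (auto simp: PiE_def Pi_def)
  then have c: "1 \<le> \<lceil>real n * u j\<rceil>" "\<lceil>real n * u j\<rceil> \<le> int (max P N)"
    using assms(3) by (auto simp: lattice_point_def)
  then have "0 < real n * u j" by linarith
  then show "0 \<le> u j" using assms(2) by (simp add: zero_less_mult_iff)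
  have "real n * u j \<le> real (max P N)" using c(2) by linarith
  then show "u j \<le> real (max P N) / real n" using assms(2) by (simp add: field_simps)
qed

text \<open>The sign in xi(i) is decided by comparing the endpoints of the edge i, i.e. by the sign of
  an integer linear form, which for generic u is eventually constant; once both signs are fixed
  the equation xi(i) = xi(j) is the vanishing of another integer linear form.\<close>

lemma eventually_const_real_xi_eq:
  assumes gen: "generic w y u" and i: "i \<in> {1..length w}" and j: "j \<in> {1..length w}"
  shows "eventually_const (\<lambda>n. real_xi s1 s2 (\<lambda>i. real n * extend w (grid_round n u) i) i =
                               real_xi s1 s2 (\<lambda>i. real n * extend w (grid_round n u) i) j)"
proof -
  have "int_linear_form w (\<lambda>x. extend w x (even_end i) - extend w x (odd_end i))"
    "int_linear_form w (\<lambda>x. extend w x (even_end j) - extend w x (odd_end j))"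
    using i j
      by (auto intro!: int_linear_form_diff int_linear_form_extend simp: even_end_def odd_end_def)
  from this[THEN eventually_const_int_linear_form_nonneg[OF gen]] obtain ci cj where
    ci: "eventually (\<lambda>n. (0 \<le> extend w (grid_round n u) (even_end i)
        - extend w (grid_round n u) (odd_end i)) = ci) sequentially" and
    cj: "eventually (\<lambda>n. (0 \<le> extend w (grid_round n u) (even_end j)
        - extend w (grid_round n u) (odd_end j)) = cj) sequentially"
    unfolding eventually_const_def by blast
  define si where "si = (if ci then s1 else s2)"
  define sj where "sj = (if cj then s1 else s2)"
  define F where "F x = real_of_int si * (extend w x (i - 1) + extend w x i)
    - real_of_int sj * (extend w x (j - 1) + extend w x j)" for x
  have F: "int_linear_form w F" unfolding F_def using i j
    by (intro int_linear_form_diff int_linear_form_scale int_linear_form_add int_linear_form_extend) auto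
  have "eventually (\<lambda>n. (real_xi s1 s2 (\<lambda>i. real n * extend w (grid_round n u) i) i =
      real_xi s1 s2 (\<lambda>i. real n * extend w (grid_round n u) i) j) = (F (grid_round n u) = 0)) sequentially"
    using ci cj eventually_gt_at_top[of 0]
  proof eventually_elim
    case (elim n)
    let ?t = "extend w (grid_round n u)"
    have "(real_xi s1 s2 (\<lambda>i. real n * ?t i) i = real_xi s1 s2 (\<lambda>i. real n * ?t i) j) =
        (real_xi s1 s2 ?t i = real_xi s1 s2 ?t j)"
      using elim(3) by (simp add: real_xi_scale)
    also have "real_xi s1 s2 ?t i = real_of_int si * (?t (i - 1) + ?t i)"
      unfolding real_xi_eq_sign si_def using elim(1) by (auto split: if_splits)
    also have "real_xi s1 s2 ?t j = real_of_int sj * (?t (j - 1) + ?t j)"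
      unfolding real_xi_eq_sign sj_def using elim(2) by (auto split: if_splits)
    finally show ?case unfolding F_def by linarith
  qed
  then show ?thesis
    by (rule eventually_const_cong) (rule eventually_const_int_linear_form_eq_zero[OF gen F])
qed

lemma eventually_const_lattice_point_in_gen_values:
  assumes gen: "generic w y u" and plim: "(\<lambda>n. real (p n) / real n) \<longlonglongrightarrow> y"
  shows "eventually_const (\<lambda>n. lattice_point w n u \<in> gen_values s1 s2 w (p n) n)"
proof -
  let ?t = "\<lambda>n i. real n * extend w (grid_round n u) i"
  have bounds: "eventually_const (\<lambda>n. \<forall>i\<in>{..length w}.
      1 \<le> ?t n i \<and> ?t n i \<le> (if even i then real (p n) else real n))"
  proof (rule eventually_const_ball)
    fix i assume "i \<in> {..length w}"
    then have f: "int_linear_form w (\<lambda>x. extend w x i)" by (intro int_linear_form_extend) auto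
    have "eventually_const (\<lambda>n. ?t n i \<le> (if even i then real (p n) else real n))"
    proof (cases "even i")
      case True
      then show ?thesis using eventually_const_int_linear_form_le_scaled[OF gen f plim] by simp
    next
      case False
      then show ?thesis
        using eventually_const_int_linear_form_le_scaled[OF gen f tendsto_of_nat_div_self] by simp
    qed
    from eventually_const_binop[OF eventually_const_int_linear_form_ge_one[OF gen f] this, of "(\<and>)"]
    show "eventually_const (\<lambda>n. 1 \<le> ?t n i \<and> ?t n i \<le> (if even i then real (p n) else real n))" .
  qed simp
  have "int_linear_form w (\<lambda>x. extend w x (length w) - extend w x 0)"
    by (intro int_linear_form_diff int_linear_form_extend) auto
  from eventually_const_int_linear_form_eq_zero[OF gen this]
  have closing: "eventually_const (\<lambda>n. ?t n (length w) = ?t n 0)"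
    by (rule eventually_const_cong_pos[rotated]) simp
  have pattern: "eventually_const (\<lambda>n. \<forall>i\<in>{1..length w}. \<forall>j\<in>{1..length w}.
      (letter w i = letter w j) = (real_xi s1 s2 (?t n) i = real_xi s1 s2 (?t n) j))"
    by (intro eventually_const_ball finite_atLeastAtMost
        eventually_const_binop[OF eventually_const_const eventually_const_real_xi_eq[OF gen]])
  have "eventually_const (\<lambda>n. real_circuit s1 s2 w (p n) n (?t n))"
    using eventually_const_binop[OF eventually_const_binop[OF bounds closing, of "(\<and>)"] pattern, of "(\<and>)"]
    by (simp add: real_circuit_def atMost_iff conj_assoc Ball_def)
  then show ?thesis
    by (rule eventually_const_cong_pos[rotated]) (simp add: lattice_point_in_gen_values_iff)
qed

lemma eventually_lattice_point_not_in_gen_values: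
  assumes gen: "generic w y u" and not_sym: "\<not> symmetric_word w"
  shows "eventually (\<lambda>n. lattice_point w n u \<notin> gen_values s1 s2 w (p n) n) sequentially"
proof -
  define f where "f x = extend w x (length w) - extend w x 0" for x
  have f: "int_linear_form w f" unfolding f_def
    by (intro int_linear_form_diff int_linear_form_extend) auto
  have "\<exists>x. f x \<noteq> 0" unfolding f_def by (rule extend_not_closing_if_not_symmetric[OF lenw not_sym])
  then have "f u \<noteq> 0" using generic_int_linear_form[OF gen f] by auto
  with int_linear_form_grid_round_tendsto[OF f] have "eventually (\<lambda>n. f (grid_round n u) \<noteq> 0) sequentially"
    by (rule tendsto_imp_eventually_ne)
  then show ?thesis using eventually_gt_at_top[of 0]
    by eventually_elim (auto simp: lattice_point_in_gen_values_iff real_circuit_def f_def)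
qed

end

lemma eventually_lattice_point_in_gen_values:
  assumes lenw: "length w = 2 * k" and plim: "(\<lambda>n. real (p n) / real n) \<longlonglongrightarrow> y"
    and gen: "generic w y u" and sym: "symmetric_word w"
    and inside: "\<And>i. i \<le> length w \<Longrightarrow> 0 < extend w u i \<and> extend w u i < (if even i then y else 1)"
  shows "eventually (\<lambda>n. lattice_point w n u \<in> gen_values 1 1 w (p n) n) sequentially"
proof -
  let ?t = "\<lambda>n i. real n * extend w (grid_round n u) i"
  have bounds: "eventually (\<lambda>n. \<forall>i\<in>{..length w}.
      1 \<le> ?t n i \<and> ?t n i \<le> (if even i then real (p n) else real n)) sequentially"
  proof (intro eventually_ball_finite ballI finite_atMost)
    fix i assume i: "i \<in> {..length w}"
    have lim: "(\<lambda>n. extend w (grid_round n u) i) \<longlonglongrightarrow> extend w u i"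
      using i by (intro int_linear_form_grid_round_tendsto[of w] int_linear_form_extend) auto
    have "eventually (\<lambda>n. 1 / real n < extend w (grid_round n u) i) sequentially"
      using eventually_less_of_tendsto_less[OF lim_1_over_n lim] inside[of i] i by simp
    moreover have "eventually (\<lambda>n. extend w (grid_round n u) i <
        (if even i then real (p n) else real n) / real n) sequentially"
    proof (cases "even i")
      case True
      then show ?thesis using eventually_less_of_tendsto_less[OF lim plim] inside[of i] i by simp
    next
      case False
      then show ?thesis
        using eventually_less_of_tendsto_less[OF lim tendsto_of_nat_div_self] inside[of i] i by simp
    qed
    ultimately show "eventually (\<lambda>n. 1 \<le> ?t n i \<and> ?t n i \<le> (if even i then real (p n) else real n)) sequentially"
      using eventually_gt_at_top[of 0]
    proof eventually_elim
      case (elim n)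
      then show ?case by (simp add: pos_divide_less_eq pos_less_divide_eq mult.commute)
    qed
  qed
  have pattern: "eventually (\<lambda>n. \<forall>i\<in>{1..length w}. \<forall>j\<in>{1..length w}.
      (letter w i = letter w j) = (real_xi 1 1 (?t n) i = real_xi 1 1 (?t n) j)) sequentially"
  proof (intro eventually_ball_finite finite_atLeastAtMost ballI)
    fix i j assume i: "i \<in> {1..length w}" and j: "j \<in> {1..length w}"
    have xi_pair_sum: "real_xi 1 1 (?t n) l = real n * pair_sum w (grid_round n u) (first_pos w l)"
      if "l \<in> {1..length w}" for n l
      using extend_pair_sum[of l w "grid_round n u"] that
      by (simp add: real_xi_unsigned pair_sum_def distrib_left[symmetric])
    show "eventually (\<lambda>n. (letter w i = letter w j) =
        (real_xi 1 1 (?t n) i = real_xi 1 1 (?t n) j)) sequentially"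
    proof (cases "letter w i = letter w j")
      case True
      then have "first_pos w i = first_pos w j" using first_pos_eq_iff[of i j w] i j by auto
      then show ?thesis using True xi_pair_sum i j by (intro always_eventually allI) simp
    next
      case False
      define F where "F x = pair_sum w x (first_pos w i) - pair_sum w x (first_pos w j)" for x
      have F: "int_linear_form w F" unfolding F_def using i j
        by (intro int_linear_form_diff int_linear_form_pair_sum) auto
      have "\<exists>x. F x \<noteq> 0" unfolding F_def using pair_sum_separates_letters[of i w j] i j False by auto
      then have "F u \<noteq> 0" using generic_int_linear_form[OF gen F] by auto
      with int_linear_form_grid_round_tendsto[OF F]
      have "eventually (\<lambda>n. F (grid_round n u) \<noteq> 0) sequentially" by (rule tendsto_imp_eventually_ne)
      then show ?thesis using eventually_gt_at_top[of 0]
        by eventually_elim (use False xi_pair_sum i j in \<open>simp add: F_def\<close>)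
    qed
  qed
  show ?thesis using bounds pattern eventually_gt_at_top[of 0]
  proof eventually_elim
    case (elim n)
    then have "real_circuit 1 1 w (p n) n (?t n)"
      unfolding real_circuit_def using extend_closes_if_symmetric[OF lenw sym, of "grid_round n u"]
        by auto
    then show ?case using lattice_point_in_gen_values_iff[of 1 1 w k, OF _ _ lenw elim(3)] by simp
  qed
qed

section \<open>Riemann sums over lattice cells\<close>

abbreviation gen_space :: "nat list \<Rightarrow> (nat \<Rightarrow> real) measure" where
  "gen_space w \<equiv> PiM (gen_vertices w) (\<lambda>_. lborel)"

lemma space_gen_space: "space (gen_space w) = gen_vertices w \<rightarrow>\<^sub>E UNIV"
  by (simp add: space_PiM)

lemma hyperplane_null_sets:
  fixes \<gamma> :: "'i \<Rightarrow> real"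
  assumes "finite J" and j0: "j0 \<in> J" "\<gamma> j0 \<noteq> 0"
  shows "{u \<in> space (PiM J (\<lambda>_. lborel)). (\<Sum>j\<in>J. u j * \<gamma> j) = c} \<in> null_sets (PiM J (\<lambda>_. lborel))"
proof -
  interpret product_sigma_finite "\<lambda>_. lborel :: real measure" by standard
  define I where "I = J - {j0}"
  have J_eq: "J = insert j0 I" and j0I: "j0 \<notin> I" and fI: "finite I"
    using j0 assms(1) unfolding I_def by auto
  define H where "H = {u \<in> space (PiM J (\<lambda>_. lborel)). (\<Sum>j\<in>J. u j * \<gamma> j) = c}"
  have Hm: "H \<in> sets (PiM J (\<lambda>_. lborel))" unfolding H_def by measurable
  have "emeasure (PiM J (\<lambda>_. lborel)) H = (\<integral>\<^sup>+ u. indicator H u \<partial>(PiM J (\<lambda>_. lborel)))"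
    using Hm by simp
  also have "\<dots> = (\<integral>\<^sup>+ x. (\<integral>\<^sup>+ t. indicator H (x(j0 := t)) \<partial>lborel) \<partial>(PiM I (\<lambda>_. lborel)))"
    unfolding J_eq by (rule product_nn_integral_insert[OF fI j0I]) (use Hm J_eq in simp)
  finally have calc: "emeasure (PiM J (\<lambda>_. lborel)) H =
      (\<integral>\<^sup>+ x. (\<integral>\<^sup>+ t. indicator H (x(j0 := t)) \<partial>lborel) \<partial>(PiM I (\<lambda>_. lborel)))" .
  have inner0: "(\<integral>\<^sup>+ t. indicator H (x(j0 := t)) \<partial>lborel) = 0"
    if x: "x \<in> space (PiM I (\<lambda>_. lborel :: real measure))" for x
  proof -
    define t0 where "t0 = (c - (\<Sum>j\<in>I. x j * \<gamma> j)) / \<gamma> j0"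
    have "(\<integral>\<^sup>+ t. indicator H (x(j0 := t)) \<partial>lborel) = (\<integral>\<^sup>+ t. indicator {t0} t \<partial>lborel)"
    proof (rule nn_integral_cong)
      fix t :: real
      have sp: "x(j0 := t) \<in> space (PiM J (\<lambda>_. lborel))" using x J_eq
        by (auto simp: space_PiM PiE_def extensional_def)
      have sum: "(\<Sum>j\<in>J. (x(j0 := t)) j * \<gamma> j) = t * \<gamma> j0 + (\<Sum>j\<in>I. x j * \<gamma> j)"
        unfolding J_eq using fI j0I by (simp add: sum.insert) (intro sum.cong, auto)
      have "(x(j0 := t) \<in> H) = (t = t0)"
        unfolding H_def t0_def using sp sum j0(2) by (auto simp: field_simps)
      then show "indicator H (x(j0 := t)) = (indicator {t0} t :: ennreal)"
        by (simp add: indicator_def)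
    qed
    also have "\<dots> = 0" by simp
    finally show ?thesis .
  qed
  have "(\<integral>\<^sup>+ x. (\<integral>\<^sup>+ t. indicator H (x(j0 := t)) \<partial>lborel) \<partial>(PiM I (\<lambda>_. lborel)))
      = (\<integral>\<^sup>+ x. 0 \<partial>(PiM I (\<lambda>_. lborel :: real measure)))"
    by (rule nn_integral_cong) (rule inner0)
  also have "\<dots> = 0" by simp
  finally have "emeasure (PiM J (\<lambda>_. lborel)) H = 0" using calc by simp
  then show ?thesis using Hm unfolding H_def by auto
qed

lemma AE_generic: "AE u in gen_space w. generic w y u"
proof -
  define \<Gamma> where "\<Gamma> = {\<gamma> \<in> gen_vertices w \<rightarrow>\<^sub>E (\<int> :: real set). \<exists>j\<in>gen_vertices w. \<gamma> j \<noteq> 0}"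
  define N where "N \<gamma> c = {u \<in> space (gen_space w). (\<Sum>j\<in>gen_vertices w. u j * \<gamma> j) = c}" for \<gamma> c
  have cG: "countable \<Gamma>" unfolding \<Gamma>_def
  proof (rule countable_subset[OF _ countable_PiE[OF finite_gen_vertices, where F="\<lambda>_. \<int> :: real set"]])
    show "countable (\<int> :: real set)" for i by (rule countable_int)
  qed auto
  have null: "(\<Union>\<gamma>\<in>\<Gamma>. \<Union>c\<in>{0, 1, y}. N \<gamma> c) \<in> null_sets (gen_space w)"
  proof (rule null_sets_UN'[OF cG])
    fix \<gamma> assume "\<gamma> \<in> \<Gamma>"
    then obtain j0 where j0: "j0 \<in> gen_vertices w" "\<gamma> j0 \<noteq> 0" unfolding \<Gamma>_def by auto
    show "(\<Union>c\<in>{0, 1, y}. N \<gamma> c) \<in> null_sets (gen_space w)"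
      by (rule null_sets_UN') (auto simp: N_def intro!: hyperplane_null_sets[where \<gamma>=\<gamma>, OF finite_gen_vertices j0])
  qed
  show ?thesis
  proof (rule AE_I'[OF null], safe)
    fix u assume u: "u \<in> space (gen_space w)" "\<not> generic w y u"
    then obtain \<gamma> where g: "\<forall>j\<in>gen_vertices w. \<gamma> j \<in> \<int>"
        "\<exists>j\<in>gen_vertices w. \<gamma> j \<noteq> 0" "(\<Sum>j\<in>gen_vertices w. u j * \<gamma> j) \<in> {0, 1, y}"
      unfolding generic_def by blast
    define \<gamma>' where "\<gamma>' = restrict \<gamma> (gen_vertices w)"
    have "\<gamma>' \<in> \<Gamma>" unfolding \<Gamma>_def \<gamma>'_def using g by auto
    moreover have "(\<Sum>j\<in>gen_vertices w. u j * \<gamma>' j) = (\<Sum>j\<in>gen_vertices w. u j * \<gamma> j)"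
      unfolding \<gamma>'_def by (rule sum.cong) auto
    ultimately show "u \<in> (\<Union>\<gamma>\<in>\<Gamma>. \<Union>c\<in>{0, 1, y}. N \<gamma> c)" using g(3) u(1) unfolding N_def by blast
  qed
qed

definition cell :: "nat list \<Rightarrow> nat \<Rightarrow> (nat \<Rightarrow> int) \<Rightarrow> (nat \<Rightarrow> real) set" where
  "cell w n m = Pi\<^sub>E (gen_vertices w) (\<lambda>j. {(real_of_int (m j) - 1) / real n <.. real_of_int (m j) / real n})"

lemma cell_sets: "cell w n m \<in> sets (gen_space w)"
  unfolding cell_def by (rule sets_PiM_I_finite[OF finite_gen_vertices]) simp

lemma cell_emeasure:
  assumes "n > 0"
  shows "emeasure (gen_space w) (cell w n m) = ennreal ((1 / real n) ^ card (gen_vertices w))"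
proof -
  interpret product_sigma_finite "\<lambda>_. lborel :: real measure" by standard
  have "emeasure (gen_space w) (cell w n m) =
      (\<Prod>j\<in>gen_vertices w. emeasure lborel {(real_of_int (m j) - 1) / real n <.. real_of_int (m j) / real n})"
    unfolding cell_def by (rule emeasure_PiM[OF finite_gen_vertices]) simp
  also have "\<dots> = (\<Prod>j\<in>gen_vertices w. ennreal (1 / real n))"
  proof (rule prod.cong)
    fix j
    have le: "(real_of_int (m j) - 1) / real n \<le> real_of_int (m j) / real n"
      using assms by (simp add: divide_right_mono)
    have "real_of_int (m j) / real n - (real_of_int (m j) - 1) / real n = 1 / real n"
      by (simp add: diff_divide_distrib)
    then show "emeasure lborel {(real_of_int (m j) - 1) / real n <.. real_of_int (m j) / real n}
        = ennreal (1 / real n)"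
      using emeasure_lborel_Ioc[OF le] by simp
  qed simp
  also have "\<dots> = ennreal ((1 / real n) ^ card (gen_vertices w))" by (simp add: ennreal_power)
  finally show ?thesis .
qed

lemma cell_measure:
  "n > 0 \<Longrightarrow> measure (gen_space w) (cell w n m) = (1 / real n) ^ card (gen_vertices w)"
  by (rule measure_eq_emeasure_eq_ennreal) (auto simp: cell_emeasure)

lemma cell_sub_space: "cell w n m \<subseteq> space (gen_space w)"
  unfolding cell_def space_gen_space by auto

lemma in_cell_iff:
  assumes u: "u \<in> space (gen_space w)" and n: "n > 0" and m: "m \<in> gen_vertices w \<rightarrow>\<^sub>E (UNIV :: int set)"
  shows "(u \<in> cell w n m) = (m = lattice_point w n u)"
proof
  assume c: "u \<in> cell w n m"
  show "m = lattice_point w n u"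
  proof
    fix j show "m j = lattice_point w n u j"
    proof (cases "j \<in> gen_vertices w")
      case True
      then have "(real_of_int (m j) - 1) / real n < u j" "u j \<le> real_of_int (m j) / real n"
        using c unfolding cell_def by (auto simp: PiE_def Pi_def)
      then have "real_of_int (m j) - 1 < real n * u j" "real n * u j \<le> real_of_int (m j)"
        using n by (auto simp: field_simps)
      then have "\<lceil>real n * u j\<rceil> = m j" by (intro ceiling_unique) auto
      then show ?thesis using True by (simp add: lattice_point_def)
    next
      case False then show ?thesis using m by (auto simp: lattice_point_def PiE_def extensional_def)
    qed
  qed
next
  assume e: "m = lattice_point w n u"
  have "u j \<in> {(real_of_int (m j) - 1) / real n <.. real_of_int (m j) / real n}" if j: "j \<in> gen_vertices w" for j
  proof -
    have "real_of_int \<lceil>real n * u j\<rceil> - 1 < real n * u j" "real n * u j \<le> real_of_int \<lceil>real n * u j\<rceil>"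
      by linarith+
    then show ?thesis using e j n by (auto simp: lattice_point_def field_simps)
  qed
  then show "u \<in> cell w n m" using u unfolding cell_def space_gen_space by (auto simp: PiE_def)
qed

definition lattice_sum :: "nat list \<Rightarrow> nat \<Rightarrow> (nat \<Rightarrow> int) set \<Rightarrow> (nat \<Rightarrow> real) \<Rightarrow> real" where
  "lattice_sum w n A u = (\<Sum>m\<in>A. indicator (cell w n m) u)"

lemma lattice_sum_measurable: "lattice_sum w n A \<in> borel_measurable (gen_space w)"
  unfolding lattice_sum_def[abs_def] by (intro borel_measurable_sum borel_measurable_indicator cell_sets)

lemma cell_0: "cell w 0 m = {}"
  unfolding cell_def using zero_in_gen_vertices[of w] by (auto simp: PiE_def Pi_def)

lemma lattice_sum_0: "lattice_sum w 0 A u = 0"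
  unfolding lattice_sum_def by (simp add: cell_0)

lemma lattice_sum_eq:
  assumes A: "finite A" "A \<subseteq> gen_vertices w \<rightarrow>\<^sub>E UNIV" and u: "u \<in> space (gen_space w)" and n: "n > 0"
  shows "lattice_sum w n A u = (if lattice_point w n u \<in> A then 1 else 0)"
proof -
  have "lattice_sum w n A u = (\<Sum>m\<in>A. if m = lattice_point w n u then 1 else 0)"
    unfolding lattice_sum_def
    by (rule sum.cong) (use A in_cell_iff[OF u n] in \<open>auto simp: indicator_def\<close>)
  also have "\<dots> = (if lattice_point w n u \<in> A then 1 else 0)"
    using A(1) by (simp add: sum.delta)
  finally show ?thesis .
qed

lemma integral_lattice_sum:
  assumes n: "n > 0"
  shows "integral\<^sup>L (gen_space w) (lattice_sum w n A) = real (card A) / real n ^ card (gen_vertices w)"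
proof -
  have "integrable (gen_space w) (indicator (cell w n m) :: _ \<Rightarrow> real)" for m
    by (rule integrable_real_indicator[OF cell_sets]) (simp add: cell_emeasure[OF n])
  then have "integral\<^sup>L (gen_space w) (lattice_sum w n A) =
      (\<Sum>m\<in>A. integral\<^sup>L (gen_space w) (indicator (cell w n m)))"
    unfolding lattice_sum_def[abs_def] by (rule Bochner_Integration.integral_sum)
  also have "\<dots> = (\<Sum>m\<in>A. (1 / real n) ^ card (gen_vertices w))"
    using cell_sub_space[of w n] by (intro sum.cong) (auto simp: cell_measure[OF n] Int_absorb2)
  finally show ?thesis by (simp add: power_one_over)
qed

definition center :: "real \<Rightarrow> nat \<Rightarrow> real" where
  "center y j = (if even j then y / 2 else 1 / 2)"

lemma extend_center: "extend w (center y) i = center y i"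
proof (induction i rule: extend_induct[where w=w])
  case (1 i) then show ?case by (simp add: extend_generating)
next
  case (2 i)
  have "center y (first_pos w i - 1) + center y (first_pos w i) = center y (i - 1) + center y i"
    using 2(3,5) by (auto simp: center_def)
  with 2 show ?case by (simp add: extend_nongenerating)
qed

text \<open>The radius compensates the growth factor 3^i in extend_abs_bound.\<close>

definition center_box :: "nat list \<Rightarrow> real \<Rightarrow> (nat \<Rightarrow> real) set" where
  "center_box w y = Pi\<^sub>E (gen_vertices w)
     (\<lambda>j. {center y j - min y 1 / (4 * 3 ^ length w) .. center y j + min y 1 / (4 * 3 ^ length w)})"

lemma extend_center_box:
  assumes y: "y > 0" and u: "u \<in> center_box w y" and i: "i \<le> length w"
  shows "0 < extend w u i \<and> extend w u i < (if even i then y else 1)"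
proof -
  define \<delta> where "\<delta> = min y 1 / (4 * 3 ^ length w)"
  have "0 \<le> \<delta>" unfolding \<delta>_def using y by simp
  define x where "x j = (if j \<in> gen_vertices w then u j - center y j else 0)" for j
  have "\<bar>x j\<bar> \<le> \<delta>" for j
    using u \<open>0 \<le> \<delta>\<close> unfolding x_def \<delta>_def center_box_def by (auto simp: PiE_def Pi_def abs_le_iff)
  then have "\<bar>extend w x i\<bar> \<le> 3 ^ i * \<delta>" by (rule extend_abs_bound)
  also have "\<dots> \<le> 3 ^ length w * \<delta>" using i \<open>0 \<le> \<delta>\<close> by (intro mult_right_mono power_increasing) auto
  also have "\<dots> = min y 1 / 4" unfolding \<delta>_def by simp
  also have "extend w x i = extend w (\<lambda>j. u j - center y j) i"
    by (rule extend_cong[OF _ i]) (simp add: x_def)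
  also have "\<dots> = extend w u i - center y i" by (simp add: extend_diff extend_center)
  finally have "\<bar>extend w u i - center y i\<bar> \<le> min y 1 / 4" .
  then have "extend w u i - center y i \<le> min y 1 / 4" "center y i - extend w u i \<le> min y 1 / 4"
    by linarith+
  moreover have "min y 1 \<le> y" "min y 1 \<le> 1" by simp_all
  moreover have "center y i = (if even i then y / 2 else 1 / 2)" by (simp add: center_def)
  ultimately show ?thesis using y by (cases "even i") simp_all
qed

lemma center_box_sets: "center_box w y \<in> sets (gen_space w)"
  unfolding center_box_def by (rule sets_PiM_I_finite[OF finite_gen_vertices]) simp

lemma emeasure_center_box_finite: "emeasure (gen_space w) (center_box w y) < \<infinity>"
  and measure_center_box_pos: "y > 0 \<Longrightarrow> 0 < measure (gen_space w) (center_box w y)"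
proof -
  interpret product_sigma_finite "\<lambda>_. lborel :: real measure" by standard
  define \<delta> where "\<delta> = min y 1 / (4 * 3 ^ length w)"
  have "emeasure (gen_space w) (center_box w y) =
      (\<Prod>j\<in>gen_vertices w. emeasure lborel {center y j - \<delta> .. center y j + \<delta>})"
    unfolding center_box_def \<delta>_def by (rule emeasure_PiM[OF finite_gen_vertices]) simp
  also have "\<dots> = (\<Prod>j\<in>gen_vertices w. ennreal (max 0 (2 * \<delta>)))"
    by (intro prod.cong refl) (auto simp: max_def)
  also have "\<dots> = ennreal (max 0 (2 * \<delta>) ^ card (gen_vertices w))"
    by (simp add: ennreal_power)
  finally have e: "emeasure (gen_space w) (center_box w y) = ennreal (max 0 (2 * \<delta>) ^ card (gen_vertices w))" .
  then show "emeasure (gen_space w) (center_box w y) < \<infinity>" by simp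
  assume "y > 0"
  then have "0 < \<delta>" unfolding \<delta>_def by simp
  with e show "0 < measure (gen_space w) (center_box w y)"
    by (subst measure_eq_emeasure_eq_ennreal[OF _ e]) auto
qed

context
  fixes s1 s2 :: int and w :: "nat list" and k :: nat and y :: real and p :: "nat \<Rightarrow> nat"
  assumes s1: "\<bar>s1\<bar> = 1" and s2: "\<bar>s2\<bar> = 1" and lenw: "length w = 2 * k"
    and plim: "(\<lambda>n. real (p n) / real n) \<longlonglongrightarrow> y"
begin

definition lattice_limit :: "(nat \<Rightarrow> real) \<Rightarrow> real" where
  "lattice_limit u = lim (\<lambda>n. lattice_sum w n (gen_values s1 s2 w (p n) n) u)"

lemma lattice_sum_gen_values_eq:
  assumes "u \<in> space (gen_space w)" "n > 0"
  shows "lattice_sum w n (gen_values s1 s2 w (p n) n) u =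
    (if lattice_point w n u \<in> gen_values s1 s2 w (p n) n then 1 else 0)"
  using gen_values_iff[OF s1 s2 lenw] finite_gen_values[OF s1 s2 lenw]
  by (intro lattice_sum_eq assms) auto

lemma lattice_sum_tendsto:
  assumes u: "u \<in> space (gen_space w)"
    and c: "eventually (\<lambda>n. (lattice_point w n u \<in> gen_values s1 s2 w (p n) n) = c) sequentially"
  shows "(\<lambda>n. lattice_sum w n (gen_values s1 s2 w (p n) n) u) \<longlonglongrightarrow> of_bool c"
    and "lattice_limit u = of_bool c"
proof -
  have "eventually (\<lambda>n. lattice_sum w n (gen_values s1 s2 w (p n) n) u = of_bool c) sequentially"
    using c eventually_gt_at_top[of 0] by eventually_elim (simp add: lattice_sum_gen_values_eq[OF u])
  then show "(\<lambda>n. lattice_sum w n (gen_values s1 s2 w (p n) n) u) \<longlonglongrightarrow> of_bool c"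
    by (rule tendsto_eventually)
  then show "lattice_limit u = of_bool c" unfolding lattice_limit_def by (rule limI)
qed

lemma AE_lattice_sum_tendsto:
  "AE u in gen_space w. (\<lambda>n. lattice_sum w n (gen_values s1 s2 w (p n) n) u) \<longlonglongrightarrow> lattice_limit u"
  using AE_generic[of w y]
proof (rule AE_mp, intro AE_I2 impI)
  fix u assume u: "u \<in> space (gen_space w)" and "generic w y u"
  with eventually_const_lattice_point_in_gen_values[OF s1 s2 lenw _ plim] obtain c
    where "eventually (\<lambda>n. (lattice_point w n u \<in> gen_values s1 s2 w (p n) n) = c) sequentially"
    unfolding eventually_const_def by blast
  from lattice_sum_tendsto[OF u this] show "(\<lambda>n. lattice_sum w n (gen_values s1 s2 w (p n) n) u) \<longlonglongrightarrow> lattice_limit u"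
    by simp
qed

text \<open>Since p/n is bounded, all nonzero lattice sums live in one bounded box.\<close>

lemma lattice_sum_dominated:
  obtains B where "integrable (gen_space w) (indicator B :: _ \<Rightarrow> real)"
    "\<And>n u. u \<in> space (gen_space w) \<Longrightarrow> norm (lattice_sum w n (gen_values s1 s2 w (p n) n) u) \<le> indicator B u"
proof -
  interpret product_sigma_finite "\<lambda>_. lborel :: real measure" by standard
  obtain K where K: "\<And>n. norm (real (p n) / real n) \<le> K"
    using convergent_imp_Bseq[OF convergentI[OF plim]] by (rule BseqE) auto
  define B where "B = Pi\<^sub>E (gen_vertices w) (\<lambda>_. {0..max K 1})"
  have "B \<in> sets (gen_space w)" unfolding B_def by (rule sets_PiM_I_finite[OF finite_gen_vertices]) simp
  moreover have "emeasure (gen_space w) B = (\<Prod>j\<in>gen_vertices w. emeasure lborel {0..max K 1})"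
    unfolding B_def by (rule emeasure_PiM[OF finite_gen_vertices]) simp
  ultimately have "integrable (gen_space w) (indicator B :: _ \<Rightarrow> real)"
    by (intro integrable_real_indicator) (auto simp: power_less_top_ennreal)
  moreover have "norm (lattice_sum w n (gen_values s1 s2 w (p n) n) u) \<le> indicator B u"
    if u: "u \<in> space (gen_space w)" for n u
  proof (cases "n > 0 \<and> lattice_point w n u \<in> gen_values s1 s2 w (p n) n")
    case True
    have "real (max (p n) n) / real n \<le> max K 1"
    proof (cases "p n \<le> n")
      case False
      then show ?thesis using K[of n] by (simp add: max_def)
    qed (use True in auto)
    then have "u j \<in> {0..max K 1}" if "j \<in> gen_vertices w" for j
      using lattice_point_in_gen_values_bounds[OF s1 s2 lenw, of n u "p n" n j] True that by auto
    then have "u \<in> B" using u unfolding B_def space_gen_space by (auto simp: PiE_def)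
    then show ?thesis using lattice_sum_gen_values_eq[OF u] True by simp
  next
    case False
    then show ?thesis by (cases "n = 0") (auto simp: lattice_sum_0 lattice_sum_gen_values_eq[OF u])
  qed
  ultimately show thesis by (rule that)
qed

lemma lattice_limit_integrable: "integrable (gen_space w) lattice_limit"
  and integral_lattice_sum_tendsto:
    "(\<lambda>n. real (card (Pi_S (signed_link s1 s2) (p n) n w)) / real n ^ card (gen_vertices w))
       \<longlonglongrightarrow> integral\<^sup>L (gen_space w) lattice_limit"
proof -
  obtain B where B: "integrable (gen_space w) (indicator B :: _ \<Rightarrow> real)"
    "\<And>n u. u \<in> space (gen_space w) \<Longrightarrow> norm (lattice_sum w n (gen_values s1 s2 w (p n) n) u) \<le> indicator B u"
    using lattice_sum_dominated by blast
  have "lattice_limit \<in> borel_measurable (gen_space w)"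
    unfolding lattice_limit_def[abs_def] by (intro borel_measurable_lim_metric lattice_sum_measurable)
  note dominated = this lattice_sum_measurable B(1) AE_lattice_sum_tendsto AE_I2[OF B(2)]
  show "integrable (gen_space w) lattice_limit" by (rule integrable_dominated_convergence[OF dominated])
  have "eventually (\<lambda>n. integral\<^sup>L (gen_space w) (lattice_sum w n (gen_values s1 s2 w (p n) n)) =
      real (card (Pi_S (signed_link s1 s2) (p n) n w)) / real n ^ card (gen_vertices w)) sequentially"
    using eventually_gt_at_top[of 0]
    by eventually_elim (simp add: integral_lattice_sum card_gen_values[OF s1 s2 lenw])
  with integral_dominated_convergence[OF dominated]
  show "(\<lambda>n. real (card (Pi_S (signed_link s1 s2) (p n) n w)) / real n ^ card (gen_vertices w))
       \<longlonglongrightarrow> integral\<^sup>L (gen_space w) lattice_limit"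
    by (rule Lim_transform_eventually)
qed

lemma integral_lattice_limit_not_symmetric:
  assumes "\<not> symmetric_word w"
  shows "integral\<^sup>L (gen_space w) lattice_limit = 0"
proof (rule integral_eq_zero_AE)
  show "AE u in gen_space w. lattice_limit u = 0"
    using AE_generic[of w y]
  proof (rule AE_mp, intro AE_I2 impI)
    fix u assume u: "u \<in> space (gen_space w)" and "generic w y u"
    then have "eventually (\<lambda>n. (lattice_point w n u \<in> gen_values s1 s2 w (p n) n) = False) sequentially"
      using eventually_lattice_point_not_in_gen_values[OF s1 s2 lenw _ assms] by simp
    from lattice_sum_tendsto(2)[OF u this] show "lattice_limit u = 0" by simp
  qed
qed

text \<open>For the symmetric link every generic point of the center box is eventually admissible.\<close>

lemma integral_lattice_limit_symmetric_pos:
  assumes "y > 0" "s1 = 1" "s2 = 1" "symmetric_word w"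
  shows "integral\<^sup>L (gen_space w) lattice_limit > 0"
proof -
  have "AE u in gen_space w. indicator (center_box w y) u \<le> lattice_limit u"
    using AE_generic[of w y]
  proof (rule AE_mp, intro AE_I2 impI)
    fix u assume u: "u \<in> space (gen_space w)" and gen: "generic w y u"
    with eventually_const_lattice_point_in_gen_values[OF s1 s2 lenw _ plim] obtain c
      where c: "eventually (\<lambda>n. (lattice_point w n u \<in> gen_values s1 s2 w (p n) n) = c) sequentially"
      unfolding eventually_const_def by blast
    show "indicator (center_box w y) u \<le> lattice_limit u"
    proof (cases "u \<in> center_box w y")
      case True
      with assms have "eventually (\<lambda>n. lattice_point w n u \<in> gen_values s1 s2 w (p n) n) sequentially"
        using eventually_lattice_point_in_gen_values[OF lenw plim gen assms(4) extend_center_box] by simp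
      with c have "eventually (\<lambda>n. c) sequentially" by eventually_elim simp
      then have c by simp
      with lattice_sum_tendsto(2)[OF u c] True show ?thesis by simp
    qed (use lattice_sum_tendsto(2)[OF u c] in auto)
  qed
  then have "integral\<^sup>L (gen_space w) (indicator (center_box w y)) \<le> integral\<^sup>L (gen_space w) lattice_limit"
    by (intro integral_mono_AE lattice_limit_integrable integrable_real_indicator
        center_box_sets emeasure_center_box_finite)
  moreover have "integral\<^sup>L (gen_space w) (indicator (center_box w y)) = measure (gen_space w) (center_box w y)"
    using sets.sets_into_space[OF center_box_sets[of w y]] by (simp add: Int_absorb2)
  ultimately show ?thesis using measure_center_box_pos[OF assms(1), of w] by simp
qed

end

lemma num_even_generating_le: "num_even_generating w \<le> card (set w) + 1"
proof -
  have "{i \<in> {0..length w}. even i \<and> generating w i} \<subseteq> gen_vertices w"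
    unfolding gen_vertices_def by auto
  then show ?thesis
    unfolding num_even_generating_def card_gen_vertices[symmetric]
      by (rule card_mono[OF finite_gen_vertices])
qed

lemma tendsto_renormalize:
  fixes a :: "nat \<Rightarrow> real" and p :: "nat \<Rightarrow> nat"
  assumes a: "(\<lambda>n. a n / real n ^ (b + 1)) \<longlonglongrightarrow> I"
    and plim: "(\<lambda>n. real (p n) / real n) \<longlonglongrightarrow> y" and "y > 0" and "r \<le> b"
  shows "(\<lambda>n. a n / (real (p n) ^ (r + 1) * real n powi (int b - int r))) \<longlonglongrightarrow> I / y ^ (r + 1)"
proof -
  have "(\<lambda>n. a n / real n ^ (b + 1) / (real (p n) / real n) ^ (r + 1)) \<longlonglongrightarrow> I / y ^ (r + 1)"
    using assms(3) by (intro tendsto_divide tendsto_power a plim) auto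
  moreover have "eventually (\<lambda>n. a n / real n ^ (b + 1) / (real (p n) / real n) ^ (r + 1) =
      a n / (real (p n) ^ (r + 1) * real n powi (int b - int r))) sequentially"
    using eventually_gt_at_top[of 0]
  proof eventually_elim
    case (elim n)
    have "real n ^ (b + 1) = real n ^ (r + 1) * real n ^ (b - r)"
      using assms(4) by (simp flip: power_add)
    moreover have "real n powi (int b - int r) = real n ^ (b - r)"
      using assms(4) by (simp add: power_int_of_nat flip: of_nat_diff)
    ultimately show ?case using elim by (simp add: power_divide field_simps)
  qed
  ultimately show ?thesis by (rule Lim_transform_eventually)
qed

lemma Pi_S_signed_link_ratio_tendsto:
  fixes p :: "nat \<Rightarrow> nat" and s1 s2 :: int
  assumes s1: "\<bar>s1\<bar> = 1" and s2: "\<bar>s2\<bar> = 1"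
    and ypos: "y > 0" and plim: "(\<lambda>n. real (p n) / real n) \<longlonglongrightarrow> y"
    and lenw: "length w = 2 * k" and b: "b = card (set w)" and r: "num_even_generating w = r + 1"
  shows "\<exists>l. ((\<lambda>n. real (card (Pi_S (signed_link s1 s2) (p n) n w)) /
                    (real (p n) ^ (r + 1) * real n powi (int b - int r))) \<longlonglongrightarrow> l)
             \<and> (s1 = 1 \<and> s2 = 1 \<and> symmetric_word w \<longrightarrow> l > 0) \<and> (\<not> symmetric_word w \<longrightarrow> l = 0)"
proof -
  define I where "I = integral\<^sup>L (gen_space w) (lattice_limit s1 s2 w p)"
  have "(\<lambda>n. real (card (Pi_S (signed_link s1 s2) (p n) n w)) / real n ^ (b + 1)) \<longlonglongrightarrow> I"
    using integral_lattice_sum_tendsto[OF s1 s2 lenw plim] unfolding I_def card_gen_vertices b .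
  moreover have "r \<le> b" using num_even_generating_le[of w] b r by simp
  ultimately have "(\<lambda>n. real (card (Pi_S (signed_link s1 s2) (p n) n w)) /
      (real (p n) ^ (r + 1) * real n powi (int b - int r))) \<longlonglongrightarrow> I / y ^ (r + 1)"
    by (rule tendsto_renormalize[OF _ plim ypos])
  moreover have "s1 = 1 \<and> s2 = 1 \<and> symmetric_word w \<longrightarrow> I > 0"
    using integral_lattice_limit_symmetric_pos[OF s1 s2 lenw plim ypos] unfolding I_def by blast
  moreover have "\<not> symmetric_word w \<longrightarrow> I = 0"
    using integral_lattice_limit_not_symmetric[OF s1 s2 lenw plim] unfolding I_def by blast
  ultimately show ?thesis using ypos by (intro exI[of _ "I / y ^ (r + 1)"]) simp
qed

theorem lemma5p6:
  fixes p :: "nat \<Rightarrow> nat" and y :: real and w :: "nat list" and k b r :: nat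
  assumes "y > 0"
    and "(\<lambda>n. real (p n) / real n) \<longlonglongrightarrow> y"
    and "is_word w" and "length w = 2 * k"
    and "b = card (set w)"
    and "num_even_generating w = r + 1"
  shows "(\<exists>l. ((\<lambda>n. real (card (Pi_S L_Hs (p n) n w)) /
                    (real (p n) ^ (r + 1) * real n powi (int b - int r))) \<longlonglongrightarrow> l)
             \<and> (symmetric_word w \<longrightarrow> l > 0) \<and> (\<not> symmetric_word w \<longrightarrow> l = 0))
       \<and> (\<exists>l. ((\<lambda>n. real (card (Pi_S L_H (p n) n w)) /
                    (real (p n) ^ (r + 1) * real n powi (int b - int r))) \<longlonglongrightarrow> l)
             \<and> (\<not> symmetric_word w \<longrightarrow> l = 0))"
  using Pi_S_signed_link_ratio_tendsto[of 1 1 y p w k b r]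
    Pi_S_signed_link_ratio_tendsto[of 1 "-1" y p w k b r] assms
  unfolding L_Hs_eq_signed_link L_H_eq_signed_link by auto

end
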